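(* Let $(X,b,m)$ be a connected weighted graph satisfying conditions (B) and (M), let $D\subset X$ be relatively dense and $\Omega:=X\setminus D$. Then $$\lambda_\Omega\ge \frac{1}{\mathrm{Inr}(\Omega)\cdot\mathrm{vol}[\mathrm{Inr}(\Omega)]},\qquad\text{where }\ \mathrm{vol}[s]:=\sup_{x\in X}\mathrm{vol}(B_s(x)).$$
   Context: A weighted graph $(X,b,m)$: $X$ countable, $b:X\times X\to[0,\infty)$ symmetric with $b(x,x)=0$ and $\sum_y b(x,y)<\infty$, $m:X\to(0,\infty)$; $\mathrm{vol}(A):=\sum_{x\in A}m(x)$. Condition (B): $\sup_x\frac{1}{m(x)}\sum_y b(x,y)<\infty$. Condition (M): $\sup_x m(x)<\infty$. On $\ell^2(X,m)$ let $\mathcal{E}(f,g)=\frac12\sum_{x,y}b(x,y)(f(x)-f(y))(\overline{g(x)}-\overline{g(y)})$ (a bounded form). A path is $\gamma=(x_0,\dots,x_k)$ with $b(x_j,x_{j+1})>0$, of length $L(\gamma)=\sum_{j=0}^{k-1}1/b(x_j,x_{j+1})$; connected means any two points are joined by a path; $d(x,y)$ is the infimum of path lengths from $x$ to $y$; $U_r(x):=\{y:d(x,y)<r\}$, $B_r(x):=\{y:d(x,y)\le r\}$. $D$ is relatively dense if $\mathrm{Covr}(D):=\inf\{R>0:\bigcup_{p\in D}B_R(p)=X\}<\infty$. Identify $\ell^2(\Omega,m)$ with $\{f\in\ell^2(X,m):f=0 \text{ on } D\}$; $H_\Omega$ is the selfadjoint operator on $\ell^2(\Omega,m)$ associated with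 the restriction of $\mathcal{E}$ to this space (the Dirichlet Laplacian), and $\lambda_\Omega:=\min\sigma(H_\Omega)$. $\mathrm{Inr}(\Omega):=\sup\{r>0:\exists x\in\Omega \text{ with } U_r(x)\subset\Omega\}$. *)

theory Defs
  imports "HOL-Analysis.Analysis"
begin

text \<open>Weighted graph (X,b,m) with X = UNIV of a countable type.\<close>

definition weighted_graph :: "('a::countable \<Rightarrow> 'a \<Rightarrow> real) \<Rightarrow> ('a \<Rightarrow> real) \<Rightarrow> bool" where
  "weighted_graph b m \<longleftrightarrow>
     (\<forall>x y. 0 \<le> b x y) \<and> (\<forall>x y. b x y = b y x) \<and> (\<forall>x. b x x = 0) \<and>
     (\<forall>x. (\<lambda>y. b x y) summable_on UNIV) \<and> (\<forall>x. 0 < m x)"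

definition condB :: "('a::countable \<Rightarrow> 'a \<Rightarrow> real) \<Rightarrow> ('a \<Rightarrow> real) \<Rightarrow> bool" where
  "condB b m \<longleftrightarrow> bdd_above (range (\<lambda>x. (\<Sum>\<^sub>\<infinity>y. b x y) / m x))"

definition condM :: "('a::countable \<Rightarrow> real) \<Rightarrow> bool" where
  "condM m \<longleftrightarrow> bdd_above (range m)"

definition vol :: "('a \<Rightarrow> real) \<Rightarrow> 'a set \<Rightarrow> real" where
  "vol m A = (\<Sum>\<^sub>\<infinity>x\<in>A. m x)"

definition is_gpath :: "('a \<Rightarrow> 'a \<Rightarrow> real) \<Rightarrow> 'a list \<Rightarrow> bool" where
  "is_gpath b \<gamma> \<longleftrightarrow> \<gamma> \<noteq> [] \<and> (\<forall>j. Suc j < length \<gamma> \<longrightarrow> 0 < b (\<gamma> ! j) (\<gamma> ! Suc j))"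

definition gpath_len :: "('a \<Rightarrow> 'a \<Rightarrow> real) \<Rightarrow> 'a list \<Rightarrow> real" where
  "gpath_len b \<gamma> = (\<Sum>j<length \<gamma> - 1. 1 / b (\<gamma> ! j) (\<gamma> ! Suc j))"

definition gconnected :: "('a \<Rightarrow> 'a \<Rightarrow> real) \<Rightarrow> bool" where
  "gconnected b \<longleftrightarrow> (\<forall>x y. \<exists>\<gamma>. is_gpath b \<gamma> \<and> hd \<gamma> = x \<and> last \<gamma> = y)"

definition gdist :: "('a \<Rightarrow> 'a \<Rightarrow> real) \<Rightarrow> 'a \<Rightarrow> 'a \<Rightarrow> real" where
  "gdist b x y = Inf {gpath_len b \<gamma> | \<gamma>. is_gpath b \<gamma> \<and> hd \<gamma> = x \<and> last \<gamma> = y}"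

definition Uball :: "('a \<Rightarrow> 'a \<Rightarrow> real) \<Rightarrow> 'a \<Rightarrow> real \<Rightarrow> 'a set" where
  "Uball b x r = {y. gdist b x y < r}"

definition Bball :: "('a \<Rightarrow> 'a \<Rightarrow> real) \<Rightarrow> 'a \<Rightarrow> real \<Rightarrow> 'a set" where
  "Bball b x r = {y. gdist b x y \<le> r}"

text \<open>Relatively dense: Covr(D) < \<infinity>, i.e. some R > 0 with the closed R-balls around D covering X.\<close>
definition rel_dense :: "('a \<Rightarrow> 'a \<Rightarrow> real) \<Rightarrow> 'a set \<Rightarrow> bool" where
  "rel_dense b D \<longleftrightarrow> (\<exists>R>0. (\<Union>p\<in>D. Bball b p R) = UNIV)"

definition Inr :: "('a \<Rightarrow> 'a \<Rightarrow> real) \<Rightarrow> 'a set \<Rightarrow> real" where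
  "Inr b \<Omega> = Sup {r. 0 < r \<and> (\<exists>x\<in>\<Omega>. Uball b x r \<subseteq> \<Omega>)}"

definition volsup :: "('a \<Rightarrow> 'a \<Rightarrow> real) \<Rightarrow> ('a \<Rightarrow> real) \<Rightarrow> real \<Rightarrow> real" where
  "volsup b m s = (SUP x. vol m (Bball b x s))"

text \<open>l^2(\<Omega>,m), identified with the functions in l^2(X,m) vanishing outside \<Omega>.\<close>
definition l2 :: "('a \<Rightarrow> real) \<Rightarrow> 'a set \<Rightarrow> ('a \<Rightarrow> complex) set" where
  "l2 m \<Omega> = {f. (\<forall>x. x \<notin> \<Omega> \<longrightarrow> f x = 0) \<and> (\<lambda>x. m x * (cmod (f x))\<^sup>2) summable_on UNIV}"

definition l2_inner :: "('a \<Rightarrow> real) \<Rightarrow> ('a \<Rightarrow> complex) \<Rightarrow> ('a \<Rightarrow> complex) \<Rightarrow> complex" where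
  "l2_inner m f g = (\<Sum>\<^sub>\<infinity>x. complex_of_real (m x) * f x * cnj (g x))"

definition energy :: "('a \<Rightarrow> 'a \<Rightarrow> real) \<Rightarrow> ('a \<Rightarrow> complex) \<Rightarrow> ('a \<Rightarrow> complex) \<Rightarrow> complex" where
  "energy b f g = (1/2) * (\<Sum>\<^sub>\<infinity>(x,y). complex_of_real (b x y) * (f x - f y) * cnj (g x - g y))"

text \<open>The operator associated with the (bounded) form restricted to l^2(\<Omega>,m):
  H f is the unique h in l^2(\<Omega>,m) with E(f,g) = <h,g> for all g in l^2(\<Omega>,m).\<close>
definition dirichlet_op :: "('a \<Rightarrow> 'a \<Rightarrow> real) \<Rightarrow> ('a \<Rightarrow> real) \<Rightarrow> 'a set \<Rightarrow> ('a \<Rightarrow> complex) \<Rightarrow> ('a \<Rightarrow> complex)" where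
  "dirichlet_op b m \<Omega> f = (THE h. h \<in> l2 m \<Omega> \<and> (\<forall>g\<in>l2 m \<Omega>. energy b f g = l2_inner m h g))"

definition dirichlet_spectrum :: "('a \<Rightarrow> 'a \<Rightarrow> real) \<Rightarrow> ('a \<Rightarrow> real) \<Rightarrow> 'a set \<Rightarrow> complex set" where
  "dirichlet_spectrum b m \<Omega> =
     {z. \<not> bij_betw (\<lambda>f x. dirichlet_op b m \<Omega> f x - z * f x) (l2 m \<Omega>) (l2 m \<Omega>)}"

end

theory Submission
  imports Defs
begin

text \<open>Join every \<open>x \<in> \<Omega>\<close> to \<open>D\<close> by a shortest path. Its length is at most \<open>Inr(\<Omega>)\<close>, since the
  open ball of that radius around \<open>x\<close> misses \<open>D\<close>. For \<open>f\<close> vanishing on \<open>D\<close>, telescoping along the path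
  and Cauchy--Schwarz give \<open>|f x|\<^sup>2 \<le> Inr(\<Omega>) \<cdot> \<Sum> b(e) |f(e\<^sub>1) - f(e\<^sub>2)|\<^sup>2\<close>, summed over the edges of
  the path. Summing against \<open>m\<close>, an edge receives weight only from vertices within distance
  \<open>Inr(\<Omega>)\<close> of its endpoint, and from each such vertex in only one orientation, so every
  unoriented edge carries total weight at most \<open>vol[Inr(\<Omega>)]\<close>. This is the Poincar\'e inequality
  \<open>\<parallel>f\<parallel>\<^sup>2 \<le> Inr(\<Omega>) vol[Inr(\<Omega>)] \<E>(f,f)\<close>, i.e. \<open>H\<^sub>\<Omega>\<close> is coercive with constant
  \<open>c = 1 / (Inr(\<Omega>) vol[Inr(\<Omega>)])\<close>. Conditions (B) and (M) make balls finite and \<open>H\<^sub>\<Omega>\<close> bounded, so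
  for \<open>Re z < c\<close> the operator \<open>H\<^sub>\<Omega> - z\<close> is bijective by the Lax--Milgram contraction argument.\<close>

section \<open>Square-summable functions\<close>

lemma mult_le_sq_add_sq:
  assumes "0 \<le> a" "0 \<le> c" shows "(a::real) * c \<le> a\<^sup>2 + c\<^sup>2"
proof -
  have "2 * (a * c) \<le> a\<^sup>2 + c\<^sup>2" using zero_le_power2[of "a - c"] by (simp add: power2_diff)
  moreover have "0 \<le> a * c" using assms by simp
  ultimately show ?thesis by linarith
qed

lemma le_1_plus_sq: "(t::real) \<le> 1 + t\<^sup>2"
  using zero_le_power2[of "t - 1/2"] by (simp add: power2_diff power2_eq_square algebra_simps)

lemma mult_cnj_eq_cmod_sq: "z * cnj z = (complex_of_real (cmod z))\<^sup>2"
  by (metis complex_norm_square of_real_power)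

lemma cmod_add_sq_le: "(cmod (a + c))\<^sup>2 \<le> 2 * (cmod a)\<^sup>2 + 2 * (cmod c)\<^sup>2"
proof -
  have "(cmod (a + c))\<^sup>2 \<le> (cmod a + cmod c)\<^sup>2"
    by (simp add: power_mono norm_triangle_ineq)
  also have "\<dots> \<le> 2 * (cmod a)\<^sup>2 + 2 * (cmod c)\<^sup>2"
    using zero_le_power2[of "cmod a - cmod c"] by (simp add: power2_diff power2_sum)
  finally show ?thesis .
qed

lemma summable_on_diff:
  fixes f g :: "'a \<Rightarrow> 'b::topological_ab_group_add"
  shows "f summable_on A \<Longrightarrow> g summable_on A \<Longrightarrow> (\<lambda>x. f x - g x) summable_on A"
  using summable_on_add[of f A "\<lambda>x. - g x"] summable_on_uminus[of g A] by simp

lemma infsum_diff: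
  fixes f g :: "'a \<Rightarrow> 'b::{topological_ab_group_add, t2_space}"
  shows "f summable_on A \<Longrightarrow> g summable_on A \<Longrightarrow> (\<Sum>\<^sub>\<infinity>x\<in>A. f x - g x) = infsum f A - infsum g A"
  using infsum_add[of f A "\<lambda>x. - g x"] summable_on_uminus[of g A] infsum_uminus[of g A] by simp

lemma summable_on_norm_bound:
  fixes f :: "'a \<Rightarrow> 'b::banach"
  assumes "g summable_on A" "\<And>x. x \<in> A \<Longrightarrow> norm (f x) \<le> g x"
  shows "f summable_on A"
  using Infinite_Sum.abs_summable_on_comparison_test'[OF assms]
  by (rule Infinite_Sum.abs_summable_summable)

lemma infsum_of_real_cmod_sq:
  fixes f :: "'a \<Rightarrow> complex"
  assumes "(\<lambda>x. w x * (cmod (f x))\<^sup>2) summable_on UNIV"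
  shows "(\<Sum>\<^sub>\<infinity>x. complex_of_real (w x) * f x * cnj (f x)) = complex_of_real (\<Sum>\<^sub>\<infinity>x. w x * (cmod (f x))\<^sup>2)"
proof -
  have "(\<lambda>x. complex_of_real (w x) * f x * cnj (f x)) = (\<lambda>x. complex_of_real (w x * (cmod (f x))\<^sup>2))"
    by (simp add: mult.assoc mult_cnj_eq_cmod_sq)
  moreover have "((\<lambda>x. complex_of_real (w x * (cmod (f x))\<^sup>2)) has_sum
      complex_of_real (\<Sum>\<^sub>\<infinity>x. w x * (cmod (f x))\<^sup>2)) UNIV"
    using assms by (intro has_sum_of_real) simp
  ultimately show ?thesis by (simp add: infsumI)
qed

definition sq_summable :: "('a \<Rightarrow> complex) \<Rightarrow> bool" where
  "sq_summable f \<longleftrightarrow> (\<lambda>x. (cmod (f x))\<^sup>2) summable_on UNIV"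

lemma sq_summable_add: "sq_summable f \<Longrightarrow> sq_summable g \<Longrightarrow> sq_summable (\<lambda>x. f x + g x)"
  unfolding sq_summable_def
  by (rule summable_on_comparison_test[of "\<lambda>x. 2 * (cmod (f x))\<^sup>2 + 2 * (cmod (g x))\<^sup>2"])
     (auto intro!: summable_on_add summable_on_cmult_right simp: cmod_add_sq_le)

lemma sq_summable_diff: "sq_summable f \<Longrightarrow> sq_summable g \<Longrightarrow> sq_summable (\<lambda>x. f x - g x)"
  using sq_summable_add[of f "\<lambda>x. - g x"] by (simp add: sq_summable_def)

lemma sq_summable_cmult: "sq_summable f \<Longrightarrow> sq_summable (\<lambda>x. c * f x)"
  unfolding sq_summable_def by (simp add: norm_mult power_mult_distrib summable_on_cmult_right)

lemma sq_summable_inner: "sq_summable f \<Longrightarrow> sq_summable g \<Longrightarrow> (\<lambda>x. f x * cnj (g x)) summable_on UNIV"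
  unfolding sq_summable_def
  by (rule summable_on_norm_bound[where g = "\<lambda>x. (cmod (f x))\<^sup>2 + (cmod (g x))\<^sup>2"])
     (auto intro!: summable_on_add simp: norm_mult mult_le_sq_add_sq)

typedef 'a ell2 = "{f::'a \<Rightarrow> complex. sq_summable f}" morphisms ell2_fun Abs_ell2
  by (intro exI[of _ "\<lambda>_. 0"]) (simp add: sq_summable_def)

setup_lifting type_definition_ell2

instantiation ell2 :: (type) real_vector
begin
lift_definition zero_ell2 :: "'a ell2" is "\<lambda>_. 0" by (simp add: sq_summable_def)
lift_definition plus_ell2 :: "'a ell2 \<Rightarrow> 'a ell2 \<Rightarrow> 'a ell2" is "\<lambda>f g x. f x + g x"
  by (rule sq_summable_add)
lift_definition uminus_ell2 :: "'a ell2 \<Rightarrow> 'a ell2" is "\<lambda>f x. - f x"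
  by (simp add: sq_summable_def)
lift_definition minus_ell2 :: "'a ell2 \<Rightarrow> 'a ell2 \<Rightarrow> 'a ell2" is "\<lambda>f g x. f x - g x"
  by (rule sq_summable_diff)
lift_definition scaleR_ell2 :: "real \<Rightarrow> 'a ell2 \<Rightarrow> 'a ell2" is "\<lambda>r f x. complex_of_real r * f x"
  by (rule sq_summable_cmult)
instance
  by standard (transfer; auto simp: algebra_simps)+
end

instantiation ell2 :: (type) real_inner
begin
lift_definition inner_ell2 :: "'a ell2 \<Rightarrow> 'a ell2 \<Rightarrow> real" is
  "\<lambda>f g. Re (\<Sum>\<^sub>\<infinity>x. f x * cnj (g x))" .
definition norm_ell2 :: "'a ell2 \<Rightarrow> real" where "norm_ell2 u = sqrt (inner u u)"
definition sgn_ell2 :: "'a ell2 \<Rightarrow> 'a ell2" where "sgn_ell2 u = u /\<^sub>R norm u"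
definition dist_ell2 :: "'a ell2 \<Rightarrow> 'a ell2 \<Rightarrow> real" where "dist_ell2 u v = norm (u - v)"
definition uniformity_ell2 :: "('a ell2 \<times> 'a ell2) filter" where
  "uniformity_ell2 = (INF e\<in>{0<..}. principal {(x, y). dist x y < e})"
definition open_ell2 :: "'a ell2 set \<Rightarrow> bool" where
  "open_ell2 U = (\<forall>x\<in>U. \<forall>\<^sub>F (x', y) in uniformity. x' = x \<longrightarrow> y \<in> U)"
instance
proof
  fix r :: real and x y z :: "'a ell2" and U :: "'a ell2 set"
  have self: "(\<Sum>\<^sub>\<infinity>x. f x * cnj (f x)) = complex_of_real (\<Sum>\<^sub>\<infinity>x. (cmod (f x))\<^sup>2)"
    if "sq_summable f" for f :: "'a \<Rightarrow> complex"
    using infsum_of_real_cmod_sq[of "\<lambda>_. 1" f] that by (simp add: sq_summable_def)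
  show "dist x y = norm (x - y)" by (simp add: dist_ell2_def)
  show "sgn x = x /\<^sub>R norm x" by (simp add: sgn_ell2_def)
  show "uniformity = (INF e\<in>{0<..}. principal {(x, y :: 'a ell2). dist x y < e})"
    by (simp add: uniformity_ell2_def)
  show "open U = (\<forall>x\<in>U. \<forall>\<^sub>F (x', y) in uniformity. x' = x \<longrightarrow> y \<in> U)"
    by (simp add: open_ell2_def)
  show "norm x = sqrt (inner x x)" by (simp add: norm_ell2_def)
  show "inner x y = inner y x"
  proof transfer
    fix f g :: "'a \<Rightarrow> complex"
    have "(\<Sum>\<^sub>\<infinity>x. g x * cnj (f x)) = cnj (\<Sum>\<^sub>\<infinity>x. f x * cnj (g x))"
      by (subst infsum_cnj[symmetric]) (simp add: mult.commute)
    then show "Re (\<Sum>\<^sub>\<infinity>x. f x * cnj (g x)) = Re (\<Sum>\<^sub>\<infinity>x. g x * cnj (f x))" by simp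
  qed
  show "inner (x + y) z = inner x z + inner y z"
  proof transfer
    fix f g h :: "'a \<Rightarrow> complex" assume "sq_summable f" "sq_summable g" "sq_summable h"
    then have "(\<Sum>\<^sub>\<infinity>x. (f x + g x) * cnj (h x)) = (\<Sum>\<^sub>\<infinity>x. f x * cnj (h x)) + (\<Sum>\<^sub>\<infinity>x. g x * cnj (h x))"
      by (simp add: distrib_right infsum_add sq_summable_inner)
    then show "Re (\<Sum>\<^sub>\<infinity>x. (f x + g x) * cnj (h x)) =
        Re (\<Sum>\<^sub>\<infinity>x. f x * cnj (h x)) + Re (\<Sum>\<^sub>\<infinity>x. g x * cnj (h x))"
      by simp
  qed
  show "inner (r *\<^sub>R x) y = r * inner x y"
  proof transfer
    fix f g :: "'a \<Rightarrow> complex" and r :: real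
    have "(\<Sum>\<^sub>\<infinity>x. complex_of_real r * f x * cnj (g x)) = complex_of_real r * (\<Sum>\<^sub>\<infinity>x. f x * cnj (g x))"
      by (simp add: mult.assoc infsum_cmult_right')
    then show "Re (\<Sum>\<^sub>\<infinity>x. complex_of_real r * f x * cnj (g x)) = r * Re (\<Sum>\<^sub>\<infinity>x. f x * cnj (g x))"
      by simp
  qed
  show "0 \<le> inner x x"
    by transfer (simp add: self infsum_nonneg)
  show "(inner x x = 0) = (x = 0)"
  proof transfer
    fix f :: "'a \<Rightarrow> complex" assume f: "sq_summable f"
    show "(Re (\<Sum>\<^sub>\<infinity>x. f x * cnj (f x)) = 0) = (f = (\<lambda>_. 0))"
    proof
      assume "Re (\<Sum>\<^sub>\<infinity>x. f x * cnj (f x)) = 0"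
      then have "(\<Sum>\<^sub>\<infinity>x. (cmod (f x))\<^sup>2) = 0" using self[OF f] by simp
      then have "\<forall>x. (cmod (f x))\<^sup>2 = 0"
        using nonneg_infsum_le_0D[of "\<lambda>x. (cmod (f x))\<^sup>2" UNIV] f
        unfolding sq_summable_def by auto
      then show "f = (\<lambda>_. 0)" by auto
    qed simp
  qed
qed
end

lemma ell2_fun_diff: "ell2_fun (u - v) x = ell2_fun u x - ell2_fun v x"
  by transfer simp

lemma ell2_fun_sq_summable: "(\<lambda>x. (cmod (ell2_fun u x))\<^sup>2) summable_on UNIV"
  using ell2_fun[of u] by (simp add: sq_summable_def)

lemma norm_ell2_sq: "(norm u)\<^sup>2 = (\<Sum>\<^sub>\<infinity>x. (cmod (ell2_fun u x))\<^sup>2)"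
proof -
  have "(\<Sum>\<^sub>\<infinity>x. ell2_fun u x * cnj (ell2_fun u x)) = complex_of_real (\<Sum>\<^sub>\<infinity>x. (cmod (ell2_fun u x))\<^sup>2)"
    using infsum_of_real_cmod_sq[of "\<lambda>_. 1" "ell2_fun u"] ell2_fun_sq_summable[of u] by simp
  then have "inner u u = (\<Sum>\<^sub>\<infinity>x. (cmod (ell2_fun u x))\<^sup>2)" by transfer simp
  then show ?thesis by (simp add: power2_norm_eq_inner)
qed

lemma cmod_ell2_fun_le_norm: "cmod (ell2_fun u x) \<le> norm u"
proof -
  have "(cmod (ell2_fun u x))\<^sup>2 \<le> (\<Sum>\<^sub>\<infinity>y. (cmod (ell2_fun u y))\<^sup>2)"
    using finite_sum_le_infsum[of "\<lambda>y. (cmod (ell2_fun u y))\<^sup>2" UNIV "{x}"]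
      ell2_fun_sq_summable[of u] by simp
  then show ?thesis unfolding norm_ell2_sq[symmetric] using power2_le_imp_le by fastforce
qed

lemma Cauchy_ell2_fun:
  assumes "Cauchy X" shows "Cauchy (\<lambda>n. ell2_fun (X n) x)"
proof (rule metric_CauchyI)
  fix e :: real assume "0 < e"
  then obtain M where M: "\<forall>m\<ge>M. \<forall>n\<ge>M. dist (X m) (X n) < e"
    using metric_CauchyD[OF assms] by blast
  have "dist (ell2_fun (X m) x) (ell2_fun (X n) x) < e" if "m \<ge> M" "n \<ge> M" for m n
    using cmod_ell2_fun_le_norm[of "X m - X n" x] M that
    by (simp add: dist_norm ell2_fun_diff) (meson le_less_trans)
  then show "\<exists>M. \<forall>m\<ge>M. \<forall>n\<ge>M. dist (ell2_fun (X m) x) (ell2_fun (X n) x) < e" by blast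
qed

lemma pointwise_limit_ell2_close:
  assumes lim: "\<And>x. (\<lambda>k. ell2_fun (X k) x) \<longlonglongrightarrow> L x"
    and close: "\<forall>k\<ge>M. \<forall>n\<ge>M. dist (X k) (X n) < e" and n: "n \<ge> M"
  shows "sq_summable (\<lambda>x. L x - ell2_fun (X n) x)"
    and "(\<Sum>\<^sub>\<infinity>x. (cmod (L x - ell2_fun (X n) x))\<^sup>2) \<le> e\<^sup>2"
proof -
  have fin: "(\<Sum>x\<in>F. (cmod (L x - ell2_fun (X n) x))\<^sup>2) \<le> e\<^sup>2" if F: "finite F" for F
  proof (rule tendsto_upperbound)
    show "(\<lambda>k. \<Sum>x\<in>F. (cmod (ell2_fun (X k) x - ell2_fun (X n) x))\<^sup>2)
        \<longlonglongrightarrow> (\<Sum>x\<in>F. (cmod (L x - ell2_fun (X n) x))\<^sup>2)"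
      by (intro tendsto_intros lim)
    have "(\<Sum>x\<in>F. (cmod (ell2_fun (X k) x - ell2_fun (X n) x))\<^sup>2) \<le> e\<^sup>2" if k: "k \<ge> M" for k
    proof -
      have "(\<Sum>x\<in>F. (cmod (ell2_fun (X k) x - ell2_fun (X n) x))\<^sup>2)
          \<le> (\<Sum>\<^sub>\<infinity>x. (cmod (ell2_fun (X k - X n) x))\<^sup>2)"
        using ell2_fun_sq_summable[of "X k - X n"] F
        by (simp add: ell2_fun_diff finite_sum_le_infsum)
      also have "\<dots> = (norm (X k - X n))\<^sup>2" by (simp add: norm_ell2_sq)
      also have "\<dots> \<le> e\<^sup>2" using close k n by (intro power_mono) (auto simp: dist_norm less_imp_le)
      finally show ?thesis .
    qed
    then show "\<forall>\<^sub>F k in sequentially. (\<Sum>x\<in>F. (cmod (ell2_fun (X k) x - ell2_fun (X n) x))\<^sup>2) \<le> e\<^sup>2"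
      by (auto simp: eventually_sequentially)
  qed simp
  show summable: "sq_summable (\<lambda>x. L x - ell2_fun (X n) x)" unfolding sq_summable_def
    by (rule nonneg_bdd_above_summable_on) (auto intro!: bdd_aboveI[of _ "e\<^sup>2"] fin)
  show "(\<Sum>\<^sub>\<infinity>x. (cmod (L x - ell2_fun (X n) x))\<^sup>2) \<le> e\<^sup>2"
    using summable unfolding sq_summable_def by (rule infsum_le_finite_sums) (auto intro: fin)
qed

instance ell2 :: (type) complete_space
proof
  fix X :: "nat \<Rightarrow> 'a ell2" assume X: "Cauchy X"
  define L where "L x = lim (\<lambda>n. ell2_fun (X n) x)" for x
  have lim: "(\<lambda>n. ell2_fun (X n) x) \<longlonglongrightarrow> L x" for x
    unfolding L_def using Cauchy_ell2_fun[OF X, of x] by (simp add: Cauchy_convergent_iff convergent_LIMSEQ_iff)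
  obtain M1 where "\<forall>m\<ge>M1. \<forall>n\<ge>M1. dist (X m) (X n) < 1" using metric_CauchyD[OF X, of 1] by auto
  then have "sq_summable (\<lambda>x. (L x - ell2_fun (X M1) x) + ell2_fun (X M1) x)"
    using pointwise_limit_ell2_close(1)[OF lim] ell2_fun[of "X M1"] by (intro sq_summable_add) auto
  then have "ell2_fun (Abs_ell2 L) = L" by (simp add: Abs_ell2_inverse)
  have "X \<longlonglongrightarrow> Abs_ell2 L"
  proof (rule metric_LIMSEQ_I)
    fix r :: real assume r: "0 < r"
    then obtain M where M: "\<forall>m\<ge>M. \<forall>n\<ge>M. dist (X m) (X n) < r / 2"
      using metric_CauchyD[OF X, of "r/2"] by auto
    have "dist (X n) (Abs_ell2 L) < r" if n: "n \<ge> M" for n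
    proof -
      have "(norm (Abs_ell2 L - X n))\<^sup>2 \<le> (r/2)\<^sup>2"
        using pointwise_limit_ell2_close(2)[OF lim M n] \<open>ell2_fun (Abs_ell2 L) = L\<close>
        by (simp add: norm_ell2_sq ell2_fun_diff)
      then have "norm (Abs_ell2 L - X n) \<le> r / 2" by (rule power2_le_imp_le) (use r in simp)
      then show ?thesis using r by (simp add: dist_norm norm_minus_commute)
    qed
    then show "\<exists>no. \<forall>n\<ge>no. dist (X n) (Abs_ell2 L) < r" by blast
  qed
  then show "convergent X" by (auto simp: convergent_def)
qed

section \<open>Paths and distances in a weighted graph\<close>

lemma is_gpath_simps [simp]:
  "\<not> is_gpath b []"
  "is_gpath b [x]"
  "is_gpath b (x # y # \<gamma>) \<longleftrightarrow> 0 < b x y \<and> is_gpath b (y # \<gamma>)"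
  by (auto simp: is_gpath_def nth_Cons split: nat.splits)

lemma gpath_len_simps [simp]:
  "gpath_len b [] = 0"
  "gpath_len b [x] = 0"
  "gpath_len b (x # y # \<gamma>) = 1 / b x y + gpath_len b (y # \<gamma>)"
  by (simp_all add: gpath_len_def sum.lessThan_Suc_shift del: sum.lessThan_Suc)

lemma gpath_len_join:
  "\<alpha> \<noteq> [] \<Longrightarrow> \<beta> \<noteq> [] \<Longrightarrow> last \<alpha> = hd \<beta> \<Longrightarrow> gpath_len b (\<alpha> @ tl \<beta>) = gpath_len b \<alpha> + gpath_len b \<beta>"
proof (induction \<alpha> rule: induct_list012)
  case (2 x)
  then show ?case by (cases \<beta>) auto
qed auto

lemma is_gpath_join:
  "\<alpha> \<noteq> [] \<Longrightarrow> \<beta> \<noteq> [] \<Longrightarrow> last \<alpha> = hd \<beta> \<Longrightarrow> is_gpath b (\<alpha> @ tl \<beta>) \<longleftrightarrow> is_gpath b \<alpha> \<and> is_gpath b \<beta>"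
proof (induction \<alpha> rule: induct_list012)
  case (2 x)
  then show ?case by (cases \<beta>) auto
qed auto

locale wgraph =
  fixes b :: "'a::countable \<Rightarrow> 'a \<Rightarrow> real" and m :: "'a \<Rightarrow> real"
  assumes weighted: "weighted_graph b m"
begin

lemma b_nonneg: "0 \<le> b x y" and b_sym: "b x y = b y x" and b_summable: "b x summable_on UNIV"
  and m_pos: "0 < m x"
  using weighted by (auto simp: weighted_graph_def)

lemma m_nonneg: "0 \<le> m x"
  using m_pos[of x] by simp

lemma gpath_len_nonneg: "0 \<le> gpath_len b \<gamma>"
  by (induction \<gamma> rule: induct_list012) (auto simp: b_nonneg)

lemma gpath_len_pos: "is_gpath b \<gamma> \<Longrightarrow> 2 \<le> length \<gamma> \<Longrightarrow> 0 < gpath_len b \<gamma>"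
  by (induction \<gamma> rule: induct_list012) (auto intro: add_pos_nonneg gpath_len_nonneg)

lemma gpath_rev: "is_gpath b \<gamma> \<Longrightarrow> is_gpath b (rev \<gamma>) \<and> gpath_len b (rev \<gamma>) = gpath_len b \<gamma>"
proof (induction \<gamma> rule: induct_list012)
  case (3 x y \<gamma>)
  have "rev (x # y # \<gamma>) = rev (y # \<gamma>) @ tl [y, x]" by simp
  then show ?case
    using 3 is_gpath_join[of "rev (y # \<gamma>)" "[y, x]" b] gpath_len_join[of "rev (y # \<gamma>)" "[y, x]" b]
    by (simp add: b_sym[of x y] last_rev)
qed auto

lemma gpath_prefix:
  "is_gpath b \<gamma> \<Longrightarrow> u \<in> set \<gamma> \<Longrightarrow>
     \<exists>\<alpha>. is_gpath b \<alpha> \<and> hd \<alpha> = hd \<gamma> \<and> last \<alpha> = u \<and> gpath_len b \<alpha> \<le> gpath_len b \<gamma>"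
proof (induction \<gamma> rule: induct_list012)
  case (2 x)
  then show ?case by (intro exI[of _ "[x]"]) auto
next
  case (3 x y \<gamma>)
  show ?case
  proof (cases "u = x")
    case True
    then show ?thesis using gpath_len_nonneg[of "x # y # \<gamma>"] by (intro exI[of _ "[x]"]) auto
  next
    case False
    with 3 obtain \<alpha> where \<alpha>: "is_gpath b \<alpha>" "hd \<alpha> = y" "last \<alpha> = u"
      "gpath_len b \<alpha> \<le> gpath_len b (y # \<gamma>)" by auto
    then obtain \<alpha>' where "\<alpha> = y # \<alpha>'" by (cases \<alpha>) auto
    then show ?thesis using 3 \<alpha> by (intro exI[of _ "x # \<alpha>"]) auto
  qed
qed auto

definition deg :: "'a \<Rightarrow> real" where "deg x = (\<Sum>\<^sub>\<infinity>y. b x y)"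

lemma deg_nonneg: "0 \<le> deg x"
  unfolding deg_def by (simp add: b_nonneg infsum_nonneg)

lemma sum_le_deg: "finite F \<Longrightarrow> sum (b x) F \<le> deg x"
  unfolding deg_def by (rule finite_sum_le_infsum) (auto simp: b_summable b_nonneg)

lemma b_le_deg: "b x y \<le> deg x"
  using sum_le_deg[of "{y}" x] by simp

lemma has_sum_b_cmult: "((\<lambda>y. b x y * c) has_sum (deg x * c)) UNIV"
  unfolding deg_def by (rule has_sum_cmult_left) (simp add: b_summable)

end

locale bounded_wgraph = wgraph +
  assumes connected: "gconnected b" and bounded_deg: "condB b m" and bounded_m: "condM m"
begin

definition deg_sup :: real where "deg_sup = Sup (range (\<lambda>x. deg x / m x))"

definition m_sup :: real where "m_sup = Sup (range m)"

lemma deg_div_m_le: "deg x / m x \<le> deg_sup"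
  unfolding deg_sup_def using bounded_deg unfolding condB_def deg_def by (intro cSup_upper) auto

lemma deg_le: "deg x \<le> deg_sup * m x"
  using deg_div_m_le[of x] m_pos[of x] by (simp add: divide_le_eq)

lemma deg_sup_nonneg: "0 \<le> deg_sup"
  using deg_div_m_le[of undefined] deg_nonneg[of undefined] m_pos[of undefined]
  by (meson divide_nonneg_pos order_trans)

lemma m_le_m_sup: "m x \<le> m_sup"
  unfolding m_sup_def using bounded_m unfolding condM_def by (intro cSup_upper) auto

lemma m_sup_pos: "0 < m_sup"
  using m_le_m_sup[of undefined] m_pos[of undefined] by simp

lemma b_le_sup: "b x y \<le> deg_sup * m_sup"
  using b_le_deg[of x y] deg_le[of x] mult_left_mono[OF m_le_m_sup[of x] deg_sup_nonneg] by linarith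

lemma b_le_m: "b x y \<le> deg_sup * m y"
  using b_sym[of x y] b_le_deg[of y x] deg_le[of y] by simp

lemma length_le_gpath_len: "is_gpath b \<gamma> \<Longrightarrow> real (length \<gamma> - 1) \<le> deg_sup * m_sup * gpath_len b \<gamma>"
proof (induction \<gamma> rule: induct_list012)
  case (3 x y \<gamma>)
  have "1 \<le> deg_sup * m_sup * (1 / b x y)" using b_le_sup[of x y] 3 by (simp add: field_simps)
  moreover have "real (length \<gamma>) \<le> deg_sup * m_sup * gpath_len b (y # \<gamma>)" using 3 by simp
  ultimately show ?case by (simp add: distrib_left)
qed auto

lemma gdist_le_gpath_len: "is_gpath b \<gamma> \<Longrightarrow> gdist b (hd \<gamma>) (last \<gamma>) \<le> gpath_len b \<gamma>"
  unfolding gdist_def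
  by (rule cInf_lower) (auto intro!: bdd_belowI[of _ 0] simp: gpath_len_nonneg)

lemma gpath_lens_ne: "{gpath_len b \<gamma> | \<gamma>. is_gpath b \<gamma> \<and> hd \<gamma> = x \<and> last \<gamma> = y} \<noteq> {}"
  using connected unfolding gconnected_def by blast

lemma gdist_nonneg: "0 \<le> gdist b x y"
  unfolding gdist_def by (rule cInf_greatest[OF gpath_lens_ne]) (auto simp: gpath_len_nonneg)

lemma gdist_self: "gdist b x x = 0"
  using gdist_le_gpath_len[of "[x]"] gdist_nonneg[of x x] by simp

lemma gdist_less_obtains_gpath:
  assumes "gdist b x y < s"
  obtains \<gamma> where "is_gpath b \<gamma>" "hd \<gamma> = x" "last \<gamma> = y" "gpath_len b \<gamma> < s"
  using cInf_lessD[OF gpath_lens_ne assms[unfolded gdist_def]] by blast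

lemma gdist_sym: "gdist b x y = gdist b y x"
proof -
  have sub: "{gpath_len b \<gamma> | \<gamma>. is_gpath b \<gamma> \<and> hd \<gamma> = x \<and> last \<gamma> = y}
      \<subseteq> {gpath_len b \<gamma> | \<gamma>. is_gpath b \<gamma> \<and> hd \<gamma> = y \<and> last \<gamma> = x}" for x y
  proof clarify
    fix \<gamma> assume "is_gpath b \<gamma>" "x = hd \<gamma>" "y = last \<gamma>"
    then show "\<exists>\<gamma>'. gpath_len b \<gamma> = gpath_len b \<gamma>' \<and> is_gpath b \<gamma>' \<and> hd \<gamma>' = last \<gamma> \<and> last \<gamma>' = hd \<gamma>"
      using gpath_rev[of \<gamma>] by (intro exI[of _ "rev \<gamma>"]) (auto simp: hd_rev last_rev)
  qed
  show ?thesis unfolding gdist_def using subset_antisym[OF sub sub] by simp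
qed

definition gpaths_within :: "real \<Rightarrow> nat \<Rightarrow> 'a \<Rightarrow> 'a list set" where
  "gpaths_within T n x = {\<gamma>. is_gpath b \<gamma> \<and> hd \<gamma> = x \<and> gpath_len b \<gamma> \<le> T \<and> length \<gamma> \<le> Suc n}"

lemma heavy_neighbours:
  assumes "0 < T"
  shows "finite {y. 1 / T \<le> b x y}" and "real (card {y. 1 / T \<le> b x y}) \<le> deg_sup * m_sup * T"
proof -
  let ?N = "{y. 1 / T \<le> b x y}"
  have card_le: "real (card F) \<le> deg x * T" if "finite F" "F \<subseteq> ?N" for F
  proof -
    have "(\<Sum>y\<in>F. 1 / T) \<le> sum (b x) F" using that by (intro sum_mono) auto
    then have "real (card F) * (1 / T) \<le> sum (b x) F" by simp
    also have "\<dots> \<le> deg x" using sum_le_deg that by blast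
    finally show ?thesis using assms by (simp add: field_simps)
  qed
  show fin: "finite ?N"
  proof (rule ccontr)
    assume "infinite ?N"
    then obtain F where "finite F" "card F = Suc (nat \<lceil>deg x * T\<rceil>)" "F \<subseteq> ?N"
      using infinite_arbitrarily_large by blast
    with card_le[of F] show False by linarith
  qed
  have "deg x * T \<le> deg_sup * m_sup * T"
    using deg_le[of x] mult_left_mono[OF m_le_m_sup[of x] deg_sup_nonneg] assms
    by (simp add: mult_right_mono)
  with card_le[OF fin] show "real (card ?N) \<le> deg_sup * m_sup * T" by simp
qed

text \<open>A path of length at most \<open>T\<close> only uses edges of weight at least \<open>1/T\<close>, and by (B) and (M)
  each vertex has at most \<open>deg_sup * m_sup * T\<close> such edges.\<close>

lemma gpaths_within_card:
  assumes "0 < T"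
  shows "finite (gpaths_within T n x) \<and> real (card (gpaths_within T n x)) \<le> (1 + deg_sup * m_sup * T) ^ n"
proof (induction n arbitrary: x)
  case 0
  have "\<gamma> = [x]" if "\<gamma> \<in> gpaths_within T 0 x" for \<gamma>
    using that by (cases \<gamma>) (auto simp: gpaths_within_def)
  then have "gpaths_within T 0 x = {} \<or> gpaths_within T 0 x = {[x]}" by auto
  then show ?case by (elim disjE) simp_all
next
  case (Suc n)
  let ?N = "{y. 1 / T \<le> b x y}" and ?q = "deg_sup * m_sup * T"
  let ?U = "\<Union>y\<in>?N. (#) x ` gpaths_within T n y"
  have sub: "gpaths_within T (Suc n) x \<subseteq> insert [x] ?U"
  proof
    fix \<gamma> assume \<gamma>: "\<gamma> \<in> gpaths_within T (Suc n) x"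
    then obtain \<gamma>' where \<gamma>': "\<gamma> = x # \<gamma>'" by (cases \<gamma>) (auto simp: gpaths_within_def)
    show "\<gamma> \<in> insert [x] ?U"
    proof (cases \<gamma>')
      case (Cons y \<gamma>'')
      have "0 < b x y" "1 / b x y + gpath_len b (y # \<gamma>'') \<le> T"
        using \<gamma> \<gamma>' Cons by (auto simp: gpaths_within_def)
      moreover note gpath_len_nonneg[of "y # \<gamma>''"]
      ultimately have "1 / b x y \<le> T" "gpath_len b (y # \<gamma>'') \<le> T"
        by (smt (verit) divide_pos_pos)+
      then have "1 / T \<le> b x y" "gpath_len b (y # \<gamma>'') \<le> T"
        using assms \<open>0 < b x y\<close> by (simp_all add: field_simps)
      then show ?thesis using \<gamma> \<gamma>' Cons by (auto simp: gpaths_within_def)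
    qed (simp add: \<gamma>')
  qed
  have q: "0 \<le> ?q" using deg_sup_nonneg m_sup_pos assms by simp
  have fin_U: "finite ?U" using heavy_neighbours(1)[OF assms] Suc by auto
  have card_Cons: "card ((#) x ` gpaths_within T n y) = card (gpaths_within T n y)" for y
    by (rule card_image) (simp add: inj_on_def)
  have "real (card ?U) \<le> (\<Sum>y\<in>?N. real (card (gpaths_within T n y)))"
    using card_UN_le[OF heavy_neighbours(1)[OF assms, of x], of "\<lambda>y. (#) x ` gpaths_within T n y"]
    by (simp add: card_Cons flip: of_nat_sum)
  also have "\<dots> \<le> (\<Sum>y\<in>?N. (1 + ?q) ^ n)"
    using Suc.IH by (intro sum_mono) blast
  also have "\<dots> \<le> ?q * (1 + ?q) ^ n"
    using heavy_neighbours(2)[OF assms, of x] q by (simp add: mult_right_mono)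
  finally have "real (card ?U) \<le> ?q * (1 + ?q) ^ n" .
  moreover have "card (insert [x] ?U) \<le> Suc (card ?U)" using fin_U by (simp add: card_insert_if)
  moreover have "card (gpaths_within T (Suc n) x) \<le> card (insert [x] ?U)"
    using sub fin_U by (simp add: card_mono)
  ultimately have "real (card (gpaths_within T (Suc n) x)) \<le> 1 + ?q * (1 + ?q) ^ n" by linarith
  also have "\<dots> \<le> (1 + ?q) ^ Suc n"
    using one_le_power[of "1 + ?q" n] q by (simp add: distrib_right)
  finally show ?case using finite_subset[OF sub] fin_U by simp
qed

end

context bounded_wgraph
begin

lemma gpaths_from_eq_within:
  assumes "0 < T"
  shows "{\<gamma>. is_gpath b \<gamma> \<and> hd \<gamma> = x \<and> gpath_len b \<gamma> \<le> T}
    = gpaths_within T (nat \<lfloor>deg_sup * m_sup * T\<rfloor>) x"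
proof -
  have "length \<gamma> \<le> Suc (nat \<lfloor>deg_sup * m_sup * T\<rfloor>)" if "is_gpath b \<gamma>" "gpath_len b \<gamma> \<le> T" for \<gamma>
  proof -
    have "deg_sup * m_sup * gpath_len b \<gamma> \<le> deg_sup * m_sup * T"
      using that deg_sup_nonneg m_sup_pos by (intro mult_left_mono) auto
    then have "real (length \<gamma> - 1) \<le> deg_sup * m_sup * T"
      using length_le_gpath_len[OF that(1)] by linarith
    then show ?thesis by linarith
  qed
  then show ?thesis by (auto simp: gpaths_within_def)
qed

lemma finite_gpaths_from: "0 < T \<Longrightarrow> finite {\<gamma>. is_gpath b \<gamma> \<and> hd \<gamma> = x \<and> gpath_len b \<gamma> \<le> T}"
  using gpaths_from_eq_within gpaths_within_card by simp

lemma Bball_subset_gpath_ends: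
  "Bball b x s \<subseteq> last ` {\<gamma>. is_gpath b \<gamma> \<and> hd \<gamma> = x \<and> gpath_len b \<gamma> \<le> max s 0 + 1}"
proof
  fix y assume "y \<in> Bball b x s"
  then have "gdist b x y < max s 0 + 1" by (simp add: Bball_def)
  then obtain \<gamma> where "is_gpath b \<gamma>" "hd \<gamma> = x" "last \<gamma> = y" "gpath_len b \<gamma> < max s 0 + 1"
    by (rule gdist_less_obtains_gpath)
  then show "y \<in> last ` {\<gamma>. is_gpath b \<gamma> \<and> hd \<gamma> = x \<and> gpath_len b \<gamma> \<le> max s 0 + 1}" by force
qed

lemma finite_Bball: "finite (Bball b x s)"
  using finite_subset[OF Bball_subset_gpath_ends] finite_gpaths_from[of "max s 0 + 1"] by simp

lemma vol_Bball: "vol m (Bball b x s) = sum m (Bball b x s)"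
  unfolding vol_def using finite_Bball by simp

lemma vol_Bball_bounded:
  "vol m (Bball b x s) \<le> (1 + deg_sup * m_sup * (max s 0 + 1)) ^ nat \<lfloor>deg_sup * m_sup * (max s 0 + 1)\<rfloor> * m_sup"
proof -
  let ?T = "max s 0 + 1"
  let ?P = "{\<gamma>. is_gpath b \<gamma> \<and> hd \<gamma> = x \<and> gpath_len b \<gamma> \<le> ?T}"
  have finP: "finite ?P" by (rule finite_gpaths_from) simp
  have "vol m (Bball b x s) \<le> real (card (Bball b x s)) * m_sup"
    unfolding vol_Bball by (intro sum_bounded_above m_le_m_sup)
  also have "card (Bball b x s) \<le> card (last ` ?P)"
    by (rule card_mono[OF finite_imageI[OF finP] Bball_subset_gpath_ends])
  also have "\<dots> \<le> card ?P" by (rule card_image_le[OF finP])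
  also have "real (card ?P) \<le> (1 + deg_sup * m_sup * ?T) ^ nat \<lfloor>deg_sup * m_sup * ?T\<rfloor>"
    using gpaths_within_card[of ?T] gpaths_from_eq_within[of ?T] by simp
  finally show ?thesis using m_sup_pos by (simp add: mult_right_mono)
qed

lemma vol_Bball_le_volsup: "vol m (Bball b x s) \<le> volsup b m s"
  unfolding volsup_def by (rule cSup_upper) (auto intro!: bdd_aboveI vol_Bball_bounded)

end

section \<open>The Dirichlet Laplacian\<close>

locale dirichlet_graph = bounded_wgraph +
  fixes D :: "'a set"
begin

definition edge_energy :: "('a \<Rightarrow> complex) \<Rightarrow> 'a \<times> 'a \<Rightarrow> real" where
  "edge_energy f e = b (fst e) (snd e) * (cmod (f (fst e) - f (snd e)))\<^sup>2"

lemma edge_energy_nonneg: "0 \<le> edge_energy f e"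
  unfolding edge_energy_def using b_nonneg by simp

lemma edge_energy_swap: "edge_energy f (prod.swap e) = edge_energy f e"
  unfolding edge_energy_def by (simp add: b_sym norm_minus_commute)

abbreviation L2 where "L2 \<equiv> l2 m (- D)"

definition norm2 :: "('a \<Rightarrow> complex) \<Rightarrow> real" where "norm2 f = (\<Sum>\<^sub>\<infinity>x. m x * (cmod (f x))\<^sup>2)"

lemma L2_vanishes: "f \<in> L2 \<Longrightarrow> x \<in> D \<Longrightarrow> f x = 0" unfolding l2_def by auto
lemma L2_summable: "f \<in> L2 \<Longrightarrow> (\<lambda>x. m x * (cmod (f x))\<^sup>2) summable_on UNIV" unfolding l2_def by auto
lemma L2I: "(\<And>x. x \<in> D \<Longrightarrow> f x = 0) \<Longrightarrow> (\<lambda>x. m x * (cmod (f x))\<^sup>2) summable_on UNIV \<Longrightarrow> f \<in> L2"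
  unfolding l2_def by auto

lemma m_cmod_add_sq_le: "m x * (cmod (a + c))\<^sup>2 \<le> 2 * (m x * (cmod a)\<^sup>2) + 2 * (m x * (cmod c)\<^sup>2)"
proof -
  have "m x * (cmod (a + c))\<^sup>2 \<le> m x * (2 * (cmod a)\<^sup>2 + 2 * (cmod c)\<^sup>2)"
    by (rule mult_left_mono[OF cmod_add_sq_le m_nonneg])
  then show ?thesis by (simp add: algebra_simps)
qed

lemma m_cmod_diff_sq_le: "m x * (cmod (a - c))\<^sup>2 \<le> 2 * (m x * (cmod a)\<^sup>2) + 2 * (m x * (cmod c)\<^sup>2)"
  using m_cmod_add_sq_le[of x a "- c"] by simp

lemma norm2_nonneg: "0 \<le> norm2 f" unfolding norm2_def using m_nonneg by (intro infsum_nonneg) simp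

lemma L2_add: "f \<in> L2 \<Longrightarrow> g \<in> L2 \<Longrightarrow> (\<lambda>x. f x + g x) \<in> L2"
proof (rule L2I)
  assume f: "f \<in> L2" and g: "g \<in> L2"
  show "(\<lambda>x. f x + g x) x = 0" if "x \<in> D" for x using that f g by (simp add: L2_vanishes)
  show "(\<lambda>x. m x * (cmod (f x + g x))\<^sup>2) summable_on UNIV"
    by (rule summable_on_comparison_test[of "\<lambda>x. 2 * (m x * (cmod (f x))\<^sup>2) + 2 * (m x * (cmod (g x))\<^sup>2)"])
       (auto intro!: summable_on_add summable_on_cmult_right L2_summable f g m_cmod_add_sq_le simp: m_nonneg)
qed

lemma m_cmod_mult_sq: "m x * (cmod (c * a))\<^sup>2 = (cmod c)\<^sup>2 * (m x * (cmod a)\<^sup>2)"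
  by (simp add: norm_mult power_mult_distrib)

lemma L2_cmult: "f \<in> L2 \<Longrightarrow> (\<lambda>x. c * f x) \<in> L2"
  by (rule L2I) (auto simp: L2_vanishes m_cmod_mult_sq intro!: summable_on_cmult_right L2_summable)

lemma L2_diff: "f \<in> L2 \<Longrightarrow> g \<in> L2 \<Longrightarrow> (\<lambda>x. f x - g x) \<in> L2"
  using L2_add[of f "\<lambda>x. (-1) * g x"] L2_cmult[of g "-1"] by simp

lemma norm2_diff_le: "f \<in> L2 \<Longrightarrow> g \<in> L2 \<Longrightarrow> norm2 (\<lambda>x. f x - g x) \<le> 2 * norm2 f + 2 * norm2 g"
proof -
  assume f: "f \<in> L2" and g: "g \<in> L2"
  have "norm2 (\<lambda>x. f x - g x) \<le> (\<Sum>\<^sub>\<infinity>x. 2 * (m x * (cmod (f x))\<^sup>2) + 2 * (m x * (cmod (g x))\<^sup>2))"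
    unfolding norm2_def
  proof (rule infsum_mono)
    show "(\<lambda>x. m x * (cmod (f x - g x))\<^sup>2) summable_on UNIV" using L2_summable[OF L2_diff[OF f g]] .
    show "(\<lambda>x. 2 * (m x * (cmod (f x))\<^sup>2) + 2 * (m x * (cmod (g x))\<^sup>2)) summable_on UNIV"
      by (intro summable_on_add summable_on_cmult_right L2_summable f g)
    fix x
    show "m x * (cmod (f x - g x))\<^sup>2 \<le> 2 * (m x * (cmod (f x))\<^sup>2) + 2 * (m x * (cmod (g x))\<^sup>2)"
      by (rule m_cmod_diff_sq_le)
  qed
  also have "\<dots> = 2 * norm2 f + 2 * norm2 g" unfolding norm2_def
    by (simp add: infsum_add summable_on_cmult_right L2_summable f g infsum_cmult_right')
  finally show ?thesis .
qed

lemma norm2_cmult: "norm2 (\<lambda>x. c * f x) = (cmod c)\<^sup>2 * norm2 f"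
  unfolding norm2_def m_cmod_mult_sq by (rule infsum_cmult_right')

lemma norm2_le_0_imp_zero: "f \<in> L2 \<Longrightarrow> norm2 f \<le> 0 \<Longrightarrow> f = (\<lambda>_. 0)"
proof -
  assume f: "f \<in> L2" "norm2 f \<le> 0"
  have "\<forall>x. m x * (cmod (f x))\<^sup>2 = 0"
    using nonneg_infsum_le_0D[of "\<lambda>x. m x * (cmod (f x))\<^sup>2" UNIV] f L2_summable m_nonneg unfolding norm2_def by auto
  show ?thesis
  proof
    fix x
    have "m x * (cmod (f x))\<^sup>2 = 0" using \<open>\<forall>x. m x * (cmod (f x))\<^sup>2 = 0\<close> by simp
    then show "f x = 0" using m_pos[of x] by simp
  qed
qed

lemma weighted_sq_summable:
  assumes f: "f \<in> L2" and w: "\<And>x. 0 \<le> w x" "\<And>x. w x \<le> deg_sup * m x"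
  shows "(\<lambda>x. w x * (cmod (f x))\<^sup>2) summable_on UNIV"
    and "(\<Sum>\<^sub>\<infinity>x. w x * (cmod (f x))\<^sup>2) \<le> deg_sup * norm2 f"
proof -
  have le: "w x * (cmod (f x))\<^sup>2 \<le> deg_sup * (m x * (cmod (f x))\<^sup>2)" for x
    using w(2)[of x] by (simp add: mult_right_mono mult.assoc[symmetric])
  have s: "(\<lambda>x. deg_sup * (m x * (cmod (f x))\<^sup>2)) summable_on UNIV"
    by (intro summable_on_cmult_right L2_summable f)
  show s2: "(\<lambda>x. w x * (cmod (f x))\<^sup>2) summable_on UNIV"
    by (rule summable_on_comparison_test[OF s le]) (simp add: w(1))
  have "(\<Sum>\<^sub>\<infinity>x. w x * (cmod (f x))\<^sup>2) \<le> (\<Sum>\<^sub>\<infinity>x. deg_sup * (m x * (cmod (f x))\<^sup>2))"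
    by (rule infsum_mono[OF s2 s le])
  also have "\<dots> = deg_sup * norm2 f" unfolding norm2_def by (rule infsum_cmult_right')
  finally show "(\<Sum>\<^sub>\<infinity>x. w x * (cmod (f x))\<^sup>2) \<le> deg_sup * norm2 f" .
qed

lemma b_sq_summable: "f \<in> L2 \<Longrightarrow> (\<lambda>y. b x y * (cmod (f y))\<^sup>2) summable_on UNIV"
  using weighted_sq_summable(1)[of f "b x"] b_nonneg b_le_m by blast

lemmas deg_sq_summable = weighted_sq_summable[of _ deg, OF _ deg_nonneg deg_le]

lemma edge_sq_summable_fst: assumes f: "f \<in> L2"
  shows "(\<lambda>(x,y). b x y * (cmod (f x))\<^sup>2) summable_on UNIV"
proof -
  have "(\<lambda>(x,y). b x y * (cmod (f x))\<^sup>2) summable_on Sigma UNIV (\<lambda>_. UNIV)"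
  proof (rule summable_on_SigmaI[where g="\<lambda>x. deg x * (cmod (f x))\<^sup>2"])
    show "((\<lambda>y. case (x, y) of (x, y) \<Rightarrow> b x y * (cmod (f x))\<^sup>2) has_sum deg x * (cmod (f x))\<^sup>2) UNIV" for x
      using has_sum_b_cmult by simp
    show "(\<lambda>x. deg x * (cmod (f x))\<^sup>2) summable_on UNIV" using deg_sq_summable(1)[OF f] .
  qed (auto simp: b_nonneg)
  then show ?thesis by simp
qed

lemma edge_sq_summable_snd: assumes f: "f \<in> L2"
  shows "(\<lambda>(x,y). b x y * (cmod (f y))\<^sup>2) summable_on UNIV"
proof -
  have "(\<lambda>(x,y). b x y * (cmod (f x))\<^sup>2) summable_on (UNIV \<times> UNIV)" using edge_sq_summable_fst[OF f] by simp
  then have "(\<lambda>(x,y). (\<lambda>(x,y). b x y * (cmod (f x))\<^sup>2) (y,x)) summable_on (UNIV \<times> UNIV)"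
    using summable_on_swap by blast
  then show ?thesis by (simp add: b_sym)
qed

definition energy_sum :: "('a \<Rightarrow> complex) \<Rightarrow> real" where "energy_sum f = (\<Sum>\<^sub>\<infinity>e. edge_energy f e)"

lemma edge_energy_le: "edge_energy f (x,y) \<le> 2 * (b x y * (cmod (f x))\<^sup>2) + 2 * (b x y * (cmod (f y))\<^sup>2)"
proof -
  have "(cmod (f x - f y))\<^sup>2 \<le> 2 * (cmod (f x))\<^sup>2 + 2 * (cmod (- f y))\<^sup>2"
    using cmod_add_sq_le[of "f x" "- f y"] by simp
  then have "b x y * (cmod (f x - f y))\<^sup>2 \<le> b x y * (2 * (cmod (f x))\<^sup>2 + 2 * (cmod (f y))\<^sup>2)"
    by (simp add: mult_left_mono b_nonneg)
  then show ?thesis unfolding edge_energy_def by (simp add: algebra_simps)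
qed

lemma edge_energy_summable: assumes f: "f \<in> L2" shows "edge_energy f summable_on UNIV"
proof -
  let ?p = "\<lambda>(x,y). b x y * (cmod (f x))\<^sup>2" and ?q = "\<lambda>(x,y). b x y * (cmod (f y))\<^sup>2"
  have "(\<lambda>e. 2 * ?p e + 2 * ?q e) summable_on UNIV"
    using edge_sq_summable_fst[OF f] edge_sq_summable_snd[OF f] by (intro summable_on_add summable_on_cmult_right)
  then show ?thesis
    by (rule summable_on_comparison_test) (auto simp: edge_energy_le edge_energy_nonneg split: prod.splits)
qed

lemma energy_sum_nonneg: "0 \<le> energy_sum f"
  unfolding energy_sum_def using edge_energy_nonneg by (intro infsum_nonneg) auto

lemma pair_sq_sum_eq_deg: "f \<in> L2 \<Longrightarrow> (\<Sum>\<^sub>\<infinity>(x,y). b x y * (cmod (f x))\<^sup>2) = (\<Sum>\<^sub>\<infinity>x. deg x * (cmod (f x))\<^sup>2)"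
  using infsum_Sigma_banach[of "\<lambda>(x,y). b x y * (cmod (f x))\<^sup>2" UNIV "\<lambda>_. UNIV"] edge_sq_summable_fst[of f]
  by (simp add: infsumI[OF has_sum_b_cmult])

lemma pair_sq_sum_swap: "(\<Sum>\<^sub>\<infinity>(x,y). b x y * (cmod (f y))\<^sup>2) = (\<Sum>\<^sub>\<infinity>(x,y). b x y * (cmod (f x))\<^sup>2)"
proof -
  have "(\<Sum>\<^sub>\<infinity>(x,y). b x y * (cmod (f y))\<^sup>2) = (\<Sum>\<^sub>\<infinity>(x,y)\<in>prod.swap ` UNIV. b x y * (cmod (f y))\<^sup>2)"
    by simp
  also have "\<dots> = (\<Sum>\<^sub>\<infinity>e. (\<lambda>(x,y). b x y * (cmod (f y))\<^sup>2) (prod.swap e))"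
    by (subst infsum_reindex) (auto simp: o_def)
  finally show ?thesis by (simp add: case_prod_beta' b_sym)
qed

lemma energy_sum_le: assumes f: "f \<in> L2" shows "energy_sum f \<le> 4 * deg_sup * norm2 f"
proof -
  let ?p = "\<lambda>(x,y). b x y * (cmod (f x))\<^sup>2" and ?q = "\<lambda>(x,y). b x y * (cmod (f y))\<^sup>2"
  have "energy_sum f \<le> (\<Sum>\<^sub>\<infinity>e. 2 * ?p e + 2 * ?q e)"
    unfolding energy_sum_def using edge_energy_summable[OF f] edge_sq_summable_fst[OF f] edge_sq_summable_snd[OF f]
    by (intro infsum_mono) (auto intro!: summable_on_add summable_on_cmult_right
        simp: edge_energy_le split: prod.splits)
  also have "\<dots> = 2 * infsum ?p UNIV + 2 * infsum ?q UNIV"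
    using edge_sq_summable_fst[OF f] edge_sq_summable_snd[OF f]
    by (simp add: infsum_add summable_on_cmult_right infsum_cmult_right')
  also have "\<dots> = 4 * (\<Sum>\<^sub>\<infinity>x. deg x * (cmod (f x))\<^sup>2)"
    using pair_sq_sum_swap[of f] pair_sq_sum_eq_deg[OF f] by simp
  also have "\<dots> \<le> 4 * (deg_sup * norm2 f)" using deg_sq_summable(2)[OF f] by simp
  finally show ?thesis by simp
qed

definition lap :: "('a \<Rightarrow> complex) \<Rightarrow> 'a \<Rightarrow> complex" where
  "lap f x = (\<Sum>\<^sub>\<infinity>y. complex_of_real (b x y) * (f x - f y))"

definition dlap :: "('a \<Rightarrow> complex) \<Rightarrow> 'a \<Rightarrow> complex" where
  "dlap f x = (if x \<in> D then 0 else lap f x / complex_of_real (m x))"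

lemma of_real_b_summable: "(\<lambda>y. complex_of_real (b x y)) summable_on UNIV"
  using summable_on_of_real[OF b_summable] .

lemma b_mult_summable: assumes f: "f \<in> L2"
  shows "(\<lambda>y. complex_of_real (b x y) * f y) summable_on UNIV"
proof (rule summable_on_norm_bound)
  show "(\<lambda>y. b x y + b x y * (cmod (f y))\<^sup>2) summable_on UNIV"
    using b_sq_summable[OF f, of x] by (intro summable_on_add b_summable) auto
  fix y
  have "cmod (complex_of_real (b x y) * f y) = b x y * cmod (f y)" by (simp add: norm_mult b_nonneg)
  also have "\<dots> \<le> b x y * (1 + (cmod (f y))\<^sup>2)" by (intro mult_left_mono le_1_plus_sq b_nonneg)
  finally show "cmod (complex_of_real (b x y) * f y) \<le> b x y + b x y * (cmod (f y))\<^sup>2"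
    by (simp add: algebra_simps)
qed

lemma lap_summable: assumes f: "f \<in> L2"
  shows "(\<lambda>y. complex_of_real (b x y) * (f x - f y)) summable_on UNIV"
proof -
  have "(\<lambda>y. complex_of_real (b x y) * f x - complex_of_real (b x y) * f y) summable_on UNIV"
    by (intro summable_on_diff summable_on_cmult_left of_real_b_summable b_mult_summable f)
  then show ?thesis by (simp add: right_diff_distrib)
qed

lemma lap_diff: assumes f: "f \<in> L2" and g: "g \<in> L2"
  shows "lap (\<lambda>x. f x - g x) x = lap f x - lap g x"
proof -
  have "lap (\<lambda>x. f x - g x) x = (\<Sum>\<^sub>\<infinity>y. complex_of_real (b x y) * (f x - f y) - complex_of_real (b x y) * (g x - g y))"
    unfolding lap_def by (intro infsum_cong) (simp add: algebra_simps)
  also have "\<dots> = lap f x - lap g x" unfolding lap_def by (intro infsum_diff lap_summable f g)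
  finally show ?thesis .
qed

lemma dlap_diff: assumes f: "f \<in> L2" and g: "g \<in> L2"
  shows "dlap (\<lambda>x. f x - g x) = (\<lambda>x. dlap f x - dlap g x)"
  unfolding dlap_def using lap_diff[OF f g] by (auto simp: fun_eq_iff diff_divide_distrib)

definition vertex_energy :: "('a \<Rightarrow> complex) \<Rightarrow> 'a \<Rightarrow> real" where "vertex_energy f x = (\<Sum>\<^sub>\<infinity>y. edge_energy f (x,y))"

lemma edge_energy_row_summable: assumes f: "f \<in> L2" shows "(\<lambda>y. edge_energy f (x,y)) summable_on UNIV"
proof (rule summable_on_comparison_test)
  show "(\<lambda>y. 2 * (b x y * (cmod (f x))\<^sup>2) + 2 * (b x y * (cmod (f y))\<^sup>2)) summable_on UNIV"
    using b_sq_summable[OF f, of x]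
      by (intro summable_on_add summable_on_cmult_right summable_on_cmult_left b_summable) auto
qed (auto simp: edge_energy_le edge_energy_nonneg)

lemma vertex_energy_nonneg: "0 \<le> vertex_energy f x"
  unfolding vertex_energy_def using edge_energy_nonneg by (intro infsum_nonneg) auto

lemma energy_sum_vertexwise: assumes f: "f \<in> L2"
  shows "(\<lambda>x. vertex_energy f x) summable_on UNIV \<and> energy_sum f = (\<Sum>\<^sub>\<infinity>x. vertex_energy f x)"
proof -
  have s: "edge_energy f summable_on Sigma UNIV (\<lambda>_. UNIV)" using edge_energy_summable[OF f] by simp
  have s': "(\<lambda>(x,y). edge_energy f (x,y)) summable_on Sigma UNIV (\<lambda>_. UNIV)" using s by simp
  have "(\<lambda>x. \<Sum>\<^sub>\<infinity>y. edge_energy f (x,y)) summable_on UNIV" using summable_on_Sigma_banach[OF s'] by simp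
  moreover have "(\<Sum>\<^sub>\<infinity>x. \<Sum>\<^sub>\<infinity>y. edge_energy f (x,y)) = energy_sum f"
    using infsum_Sigma_banach[OF s] unfolding energy_sum_def by simp
  ultimately show ?thesis unfolding vertex_energy_def by simp
qed

lemma lap_bound: assumes f: "f \<in> L2" shows "(cmod (lap f x))\<^sup>2 \<le> deg x * vertex_energy f x"
proof -
  define a where "a y = b x y * cmod (f x - f y)" for y
  have na: "cmod (complex_of_real (b x y) * (f x - f y)) = a y" for y
    unfolding a_def by (simp add: norm_mult b_nonneg)
  have asumm: "a summable_on UNIV"
  proof (rule summable_on_comparison_test)
    show "(\<lambda>y. b x y + edge_energy f (x,y)) summable_on UNIV"
      by (intro summable_on_add b_summable edge_energy_row_summable f)
    fix y
    have "a y \<le> b x y * (1 + (cmod (f x - f y))\<^sup>2)"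
      unfolding a_def by (intro mult_left_mono le_1_plus_sq b_nonneg)
    then show "a y \<le> b x y + edge_energy f (x,y)" by (simp add: edge_energy_def algebra_simps)
    show "0 \<le> a y" unfolding a_def by (simp add: b_nonneg)
  qed
  have "cmod (lap f x) \<le> (\<Sum>\<^sub>\<infinity>y. cmod (complex_of_real (b x y) * (f x - f y)))"
    unfolding lap_def by (rule Infinite_Sum.norm_infsum_bound) (simp add: na asumm)
  also have "\<dots> = (\<Sum>\<^sub>\<infinity>y. a y)" by (simp add: na)
  also have "\<dots> \<le> sqrt (deg x * vertex_energy f x)"
  proof (rule infsum_le_finite_sums[OF asumm])
    fix F :: "'a set" assume F: "finite F"
    have "(\<Sum>y\<in>F. a y)\<^sup>2 = (\<Sum>y\<in>F. sqrt (b x y) * (sqrt (b x y) * cmod (f x - f y)))\<^sup>2"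
      unfolding a_def by (simp add: b_nonneg mult.assoc[symmetric])
    also have "\<dots> \<le> (\<Sum>y\<in>F. (sqrt (b x y))\<^sup>2) * (\<Sum>y\<in>F. (sqrt (b x y) * cmod (f x - f y))\<^sup>2)"
      by (rule Cauchy_Schwarz_ineq_sum)
    also have "\<dots> = (\<Sum>y\<in>F. b x y) * (\<Sum>y\<in>F. edge_energy f (x,y))"
      by (simp add: b_nonneg edge_energy_def power_mult_distrib)
    also have "\<dots> \<le> deg x * vertex_energy f x"
    proof (rule mult_mono)
      show "(\<Sum>y\<in>F. b x y) \<le> deg x" using sum_le_deg[OF F] by simp
      show "(\<Sum>y\<in>F. edge_energy f (x,y)) \<le> vertex_energy f x"
        unfolding vertex_energy_def using edge_energy_row_summable[OF f] F edge_energy_nonneg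
        by (intro finite_sum_le_infsum) auto
      show "0 \<le> deg x" by (rule deg_nonneg)
      show "0 \<le> (\<Sum>y\<in>F. edge_energy f (x,y))" using edge_energy_nonneg by (intro sum_nonneg) auto
    qed
    finally show "sum a F \<le> sqrt (deg x * vertex_energy f x)" by (rule real_le_rsqrt)
  qed
  finally have "cmod (lap f x) \<le> sqrt (deg x * vertex_energy f x)" .
  then have "(cmod (lap f x))\<^sup>2 \<le> (sqrt (deg x * vertex_energy f x))\<^sup>2" by (intro power_mono) auto
  also have "\<dots> = deg x * vertex_energy f x" using deg_nonneg vertex_energy_nonneg by simp
  finally show ?thesis .
qed

lemma dlap_bound: assumes f: "f \<in> L2"
  shows "m x * (cmod (dlap f x))\<^sup>2 \<le> deg_sup * vertex_energy f x"
proof (cases "x \<in> D")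
  case True then show ?thesis using deg_sup_nonneg vertex_energy_nonneg by (simp add: dlap_def)
next
  case False
  have mx: "0 < m x" by (rule m_pos)
  have "m x * (cmod (dlap f x))\<^sup>2 = (cmod (lap f x))\<^sup>2 / m x"
    using False mx by (simp add: dlap_def norm_divide power_divide power2_eq_square)
  also have "\<dots> \<le> deg x * vertex_energy f x / m x" using lap_bound[OF f] mx by (simp add: divide_right_mono)
  also have "\<dots> \<le> deg_sup * vertex_energy f x"
  proof -
    have "deg x / m x \<le> deg_sup" by (rule deg_div_m_le)
    then have "deg x / m x * vertex_energy f x \<le> deg_sup * vertex_energy f x"
      using vertex_energy_nonneg by (rule mult_right_mono)
    then show ?thesis by simp
  qed
  finally show ?thesis .
qed

lemma dlap_L2: assumes f: "f \<in> L2" shows "dlap f \<in> L2 \<and> norm2 (dlap f) \<le> deg_sup * energy_sum f"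
proof -
  have s: "(\<lambda>x. deg_sup * vertex_energy f x) summable_on UNIV"
    using energy_sum_vertexwise[OF f] by (intro summable_on_cmult_right) auto
  have s2: "(\<lambda>x. m x * (cmod (dlap f x))\<^sup>2) summable_on UNIV"
    by (rule summable_on_comparison_test[OF s dlap_bound[OF f]]) (simp add: m_nonneg)
  have "dlap f \<in> L2" by (rule L2I[OF _ s2]) (simp add: dlap_def)
  moreover have "norm2 (dlap f) \<le> (\<Sum>\<^sub>\<infinity>x. deg_sup * vertex_energy f x)"
    unfolding norm2_def by (rule infsum_mono[OF s2 s dlap_bound[OF f]])
  moreover have "(\<Sum>\<^sub>\<infinity>x. deg_sup * vertex_energy f x) = deg_sup * energy_sum f"
    using energy_sum_vertexwise[OF f] by (simp add: infsum_cmult_right')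
  ultimately show ?thesis by simp
qed

lemma l2_inner_summable: assumes f: "f \<in> L2" and g: "g \<in> L2"
  shows "(\<lambda>x. complex_of_real (m x) * f x * cnj (g x)) summable_on UNIV"
proof (rule summable_on_norm_bound)
  show "(\<lambda>x. m x * (cmod (f x))\<^sup>2 + m x * (cmod (g x))\<^sup>2) summable_on UNIV"
    by (intro summable_on_add L2_summable f g)
  fix x
  have "cmod (complex_of_real (m x) * f x * cnj (g x)) = m x * (cmod (f x) * cmod (g x))"
    by (simp add: norm_mult m_nonneg)
  also have "\<dots> \<le> m x * ((cmod (f x))\<^sup>2 + (cmod (g x))\<^sup>2)"
    by (intro mult_left_mono mult_le_sq_add_sq m_nonneg) auto
  finally show "cmod (complex_of_real (m x) * f x * cnj (g x)) \<le> m x * (cmod (f x))\<^sup>2 + m x * (cmod (g x))\<^sup>2"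
    by (simp add: algebra_simps)
qed

lemma l2_inner_diff_left: assumes f: "f \<in> L2" and g: "g \<in> L2" and h: "h \<in> L2"
  shows "l2_inner m (\<lambda>x. f x - g x) h = l2_inner m f h - l2_inner m g h"
proof -
  have "l2_inner m (\<lambda>x. f x - g x) h = (\<Sum>\<^sub>\<infinity>x. complex_of_real (m x) * f x * cnj (h x) - complex_of_real (m x) * g x * cnj (h x))"
    unfolding l2_inner_def by (intro infsum_cong) (simp add: algebra_simps)
  also have "\<dots> = l2_inner m f h - l2_inner m g h"
    unfolding l2_inner_def by (intro infsum_diff l2_inner_summable f g h)
  finally show ?thesis .
qed

lemma l2_inner_cmult_left: "l2_inner m (\<lambda>x. c * f x) h = c * l2_inner m f h"
proof -
  have "l2_inner m (\<lambda>x. c * f x) h = (\<Sum>\<^sub>\<infinity>x. c * (complex_of_real (m x) * f x * cnj (h x)))"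
    unfolding l2_inner_def by (intro infsum_cong) (simp add: algebra_simps)
  also have "\<dots> = c * l2_inner m f h" unfolding l2_inner_def by (rule infsum_cmult_right')
  finally show ?thesis .
qed

lemma l2_inner_self: assumes f: "f \<in> L2" shows "l2_inner m f f = complex_of_real (norm2 f)"
proof -
  have e: "(\<lambda>x. complex_of_real (m x) * f x * cnj (f x)) = (\<lambda>x. complex_of_real (m x * (cmod (f x))\<^sup>2))"
    by (simp add: mult.assoc mult_cnj_eq_cmod_sq)
  have "((\<lambda>x. complex_of_real (m x * (cmod (f x))\<^sup>2)) has_sum complex_of_real (norm2 f)) UNIV"
    unfolding norm2_def by (rule has_sum_of_real) (simp add: L2_summable f)
  then show ?thesis unfolding l2_inner_def e by (rule infsumI)
qed

lemma energy_self: assumes f: "f \<in> L2" shows "energy b f f = complex_of_real (energy_sum f / 2)"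
proof -
  have e: "(\<lambda>(x,y). complex_of_real (b x y) * (f x - f y) * cnj (f x - f y)) = (\<lambda>e. complex_of_real (edge_energy f e))"
    by (auto simp: edge_energy_def mult.assoc mult_cnj_eq_cmod_sq fun_eq_iff simp del: complex_cnj_diff)
  have "((\<lambda>e. complex_of_real (edge_energy f e)) has_sum complex_of_real (energy_sum f)) UNIV"
    unfolding energy_sum_def by (rule has_sum_of_real) (simp add: edge_energy_summable f)
  then have "(\<Sum>\<^sub>\<infinity>(x,y). complex_of_real (b x y) * (f x - f y) * cnj (f x - f y)) = complex_of_real (energy_sum f)"
    unfolding e by (rule infsumI)
  then show ?thesis unfolding energy_def by simp
qed

lemma green_term_bound:
  "cmod (complex_of_real (b x y) * (f x - f y) * cnj c) \<le> edge_energy f (x,y) + b x y * (cmod c)\<^sup>2"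
proof -
  have "cmod (complex_of_real (b x y) * (f x - f y) * cnj c) = b x y * (cmod (f x - f y) * cmod c)"
    by (simp add: norm_mult b_nonneg)
  also have "\<dots> \<le> b x y * ((cmod (f x - f y))\<^sup>2 + (cmod c)\<^sup>2)"
    by (intro mult_left_mono mult_le_sq_add_sq b_nonneg) auto
  finally show ?thesis by (simp add: edge_energy_def algebra_simps)
qed

lemma green_summable:
  assumes f: "f \<in> L2" and g: "g \<in> L2"
  shows "(\<lambda>(x,y). complex_of_real (b x y) * (f x - f y) * cnj (g x)) summable_on UNIV"
    and "(\<lambda>(x,y). complex_of_real (b x y) * (f x - f y) * cnj (g y)) summable_on UNIV"
proof -
  show "(\<lambda>(x,y). complex_of_real (b x y) * (f x - f y) * cnj (g x)) summable_on UNIV"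
    by (rule summable_on_norm_bound[where g = "\<lambda>e. edge_energy f e + (case e of (x,y) \<Rightarrow> b x y * (cmod (g x))\<^sup>2)"])
       (auto intro!: summable_on_add edge_energy_summable edge_sq_summable_fst f g simp: green_term_bound)
  show "(\<lambda>(x,y). complex_of_real (b x y) * (f x - f y) * cnj (g y)) summable_on UNIV"
    by (rule summable_on_norm_bound[where g = "\<lambda>e. edge_energy f e + (case e of (x,y) \<Rightarrow> b x y * (cmod (g y))\<^sup>2)"])
       (auto intro!: summable_on_add edge_energy_summable edge_sq_summable_snd f g simp: green_term_bound)
qed

lemma lap_inner_eq: "g \<in> L2 \<Longrightarrow> (\<Sum>\<^sub>\<infinity>x. lap f x * cnj (g x)) = l2_inner m (dlap f) g"
  unfolding l2_inner_def
    by (rule infsum_cong) (auto simp: dlap_def L2_vanishes m_pos[THEN less_imp_neq, symmetric])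

lemma green_sum_left:
  assumes f: "f \<in> L2" and g: "g \<in> L2"
  shows "(\<Sum>\<^sub>\<infinity>(x,y). complex_of_real (b x y) * (f x - f y) * cnj (g x)) = l2_inner m (dlap f) g"
proof -
  have "(\<Sum>\<^sub>\<infinity>(x,y). complex_of_real (b x y) * (f x - f y) * cnj (g x))
      = (\<Sum>\<^sub>\<infinity>x. \<Sum>\<^sub>\<infinity>y. complex_of_real (b x y) * (f x - f y) * cnj (g x))"
    using infsum_Sigma_banach[of "\<lambda>(x,y). complex_of_real (b x y) * (f x - f y) * cnj (g x)" UNIV "\<lambda>_. UNIV"]
      green_summable(1)[OF f g] by simp
  also have "\<dots> = (\<Sum>\<^sub>\<infinity>x. lap f x * cnj (g x))"
    unfolding lap_def by (intro infsum_cong) (simp add: infsum_cmult_left')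
  finally show ?thesis using lap_inner_eq[OF g] by simp
qed

text \<open>Symmetry of \<open>b\<close> turns the sum over the second endpoint into minus the first one.\<close>

lemma green_sum_right:
  assumes f: "f \<in> L2" and g: "g \<in> L2"
  shows "(\<Sum>\<^sub>\<infinity>(x,y). complex_of_real (b x y) * (f x - f y) * cnj (g y)) = - l2_inner m (dlap f) g"
proof -
  let ?P = "\<lambda>x y. complex_of_real (b x y) * (f x - f y) * cnj (g y)"
  have P: "(\<lambda>(x,y). ?P x y) summable_on UNIV \<times> UNIV" using green_summable(2)[OF f g] by simp
  have "(\<Sum>\<^sub>\<infinity>(x,y). ?P x y) = (\<Sum>\<^sub>\<infinity>x. \<Sum>\<^sub>\<infinity>y. ?P x y)"
    using infsum_Sigma_banach[of "\<lambda>(x,y). ?P x y" UNIV "\<lambda>_. UNIV"] P by simp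
  also have "\<dots> = (\<Sum>\<^sub>\<infinity>y. \<Sum>\<^sub>\<infinity>x. ?P x y)" using infsum_swap_banach[OF P] by simp
  also have "\<dots> = (\<Sum>\<^sub>\<infinity>y. - (lap f y * cnj (g y)))"
  proof (rule infsum_cong)
    fix y
    have "(\<Sum>\<^sub>\<infinity>x. ?P x y) = (\<Sum>\<^sub>\<infinity>x. complex_of_real (b x y) * (f x - f y)) * cnj (g y)"
      by (rule infsum_cmult_left')
    also have "(\<Sum>\<^sub>\<infinity>x. complex_of_real (b x y) * (f x - f y)) = (\<Sum>\<^sub>\<infinity>x. - (complex_of_real (b y x) * (f y - f x)))"
      by (intro infsum_cong) (simp add: b_sym algebra_simps)
    finally show "(\<Sum>\<^sub>\<infinity>x. ?P x y) = - (lap f y * cnj (g y))" unfolding lap_def infsum_uminus by simp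
  qed
  also have "\<dots> = - l2_inner m (dlap f) g" using lap_inner_eq[OF g] by (simp add: infsum_uminus)
  finally show ?thesis .
qed

lemma green_formula:
  assumes f: "f \<in> L2" and g: "g \<in> L2"
  shows "energy b f g = l2_inner m (dlap f) g"
proof -
  have "(\<Sum>\<^sub>\<infinity>(x,y). complex_of_real (b x y) * (f x - f y) * cnj (g x - g y))
      = (\<Sum>\<^sub>\<infinity>e. (case e of (x,y) \<Rightarrow> complex_of_real (b x y) * (f x - f y) * cnj (g x))
                - (case e of (x,y) \<Rightarrow> complex_of_real (b x y) * (f x - f y) * cnj (g y)))"
    by (intro infsum_cong) (auto simp: algebra_simps)
  also have "\<dots> = 2 * l2_inner m (dlap f) g"
    using infsum_diff[OF green_summable[OF f g]] green_sum_left[OF f g] green_sum_right[OF f g] by simp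
  finally show ?thesis unfolding energy_def by simp
qed

lemma L2_eq_0_if_orthogonal: assumes h: "h \<in> L2" and z: "\<forall>g\<in>L2. l2_inner m h g = 0"
  shows "h = (\<lambda>_. 0)"
proof
  fix x show "h x = 0"
  proof (cases "x \<in> D")
    case True then show ?thesis using L2_vanishes[OF h] by simp
  next
    case False
    define g where "g y = (if y = x then h x else 0)" for y
    have gL: "g \<in> L2"
    proof (rule L2I)
      show "g y = 0" if "y \<in> D" for y using that False by (auto simp: g_def)
      show "(\<lambda>y. m y * (cmod (g y))\<^sup>2) summable_on UNIV"
        by (rule finite_nonzero_values_imp_summable_on) (rule finite_subset[of _ "{x}"], auto simp: g_def)
    qed
    have "l2_inner m h g = (\<Sum>\<^sub>\<infinity>y\<in>{x}. complex_of_real (m y) * h y * cnj (g y))"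
      unfolding l2_inner_def by (rule infsum_cong_neutral) (auto simp: g_def)
    also have "\<dots> = complex_of_real (m x * (cmod (h x))\<^sup>2)" by (simp add: g_def mult.assoc mult_cnj_eq_cmod_sq)
    finally have "m x * (cmod (h x))\<^sup>2 = 0" using z gL by simp
    then show ?thesis using m_pos[of x] by simp
  qed
qed

lemma dirichlet_op_eq: assumes f: "f \<in> L2" shows "dirichlet_op b m (- D) f = dlap f"
  unfolding dirichlet_op_def
proof (rule the_equality)
  show "dlap f \<in> L2 \<and> (\<forall>g\<in>L2. energy b f g = l2_inner m (dlap f) g)"
    using dlap_L2[OF f] green_formula[OF f] by simp
  fix h assume a: "h \<in> L2 \<and> (\<forall>g\<in>L2. energy b f g = l2_inner m h g)"
  have hH: "(\<lambda>x. h x - dlap f x) \<in> L2" using a dlap_L2[OF f] by (intro L2_diff) auto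
  have "\<forall>g\<in>L2. l2_inner m (\<lambda>x. h x - dlap f x) g = 0"
    using a green_formula[OF f] dlap_L2[OF f] by (simp add: l2_inner_diff_left)
  then have "(\<lambda>x. h x - dlap f x) = (\<lambda>_. 0)" by (rule L2_eq_0_if_orthogonal[OF hH])
  then show "h = dlap f" by (simp add: fun_eq_iff)
qed

section \<open>Coercivity implies a spectral gap\<close>

text \<open>Multiplication by \<open>sqrt m\<close> identifies \<open>L2\<close> isometrically with the functions in \<open>ell2\<close>
  vanishing on \<open>D\<close>; this gives Banach's fixed point theorem on \<open>L2\<close>.\<close>

definition to_ell2 :: "('a \<Rightarrow> complex) \<Rightarrow> 'a ell2" where
  "to_ell2 f = Abs_ell2 (\<lambda>x. complex_of_real (sqrt (m x)) * f x)"

definition from_ell2 :: "'a ell2 \<Rightarrow> 'a \<Rightarrow> complex" where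
  "from_ell2 u x = (if x \<in> D then 0 else ell2_fun u x / complex_of_real (sqrt (m x)))"

lemma cmod_sqrt_m_mult_sq: "(cmod (complex_of_real (sqrt (m x)) * c))\<^sup>2 = m x * (cmod c)\<^sup>2"
  using m_nonneg[of x] by (simp add: norm_mult power_mult_distrib)

lemma m_cmod_div_sqrt_m_sq: "m x * (cmod (c / complex_of_real (sqrt (m x))))\<^sup>2 = (cmod c)\<^sup>2"
  using m_pos[of x] by (simp add: norm_divide power_divide)

lemma ell2_fun_to_ell2: "f \<in> L2 \<Longrightarrow> ell2_fun (to_ell2 f) = (\<lambda>x. complex_of_real (sqrt (m x)) * f x)"
  unfolding to_ell2_def
  by (rule Abs_ell2_inverse) (simp add: sq_summable_def cmod_sqrt_m_mult_sq L2_summable)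

lemma norm_to_ell2: "f \<in> L2 \<Longrightarrow> (norm (to_ell2 f))\<^sup>2 = norm2 f"
  by (simp add: norm_ell2_sq ell2_fun_to_ell2 cmod_sqrt_m_mult_sq norm2_def)

lemma to_ell2_diff: "f \<in> L2 \<Longrightarrow> g \<in> L2 \<Longrightarrow> to_ell2 f - to_ell2 g = to_ell2 (\<lambda>x. f x - g x)"
  by (simp add: ell2_fun_inject[symmetric] fun_eq_iff ell2_fun_diff ell2_fun_to_ell2 L2_diff algebra_simps)

lemma from_ell2_L2: "from_ell2 u \<in> L2"
proof (rule L2I)
  show "(\<lambda>x. m x * (cmod (from_ell2 u x))\<^sup>2) summable_on UNIV"
    by (rule summable_on_comparison_test[OF ell2_fun_sq_summable[of u]])
       (auto simp: from_ell2_def m_cmod_div_sqrt_m_sq m_nonneg)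
qed (simp add: from_ell2_def)

lemma from_to_ell2: "f \<in> L2 \<Longrightarrow> from_ell2 (to_ell2 f) = f"
  by (auto simp: fun_eq_iff from_ell2_def ell2_fun_to_ell2 L2_vanishes m_pos[THEN less_imp_neq, symmetric])

lemma norm2_from_ell2_diff_le: "norm2 (\<lambda>x. from_ell2 u x - from_ell2 v x) \<le> (norm (u - v))\<^sup>2"
  unfolding norm_ell2_sq norm2_def
proof (rule infsum_mono)
  show "(\<lambda>x. m x * (cmod (from_ell2 u x - from_ell2 v x))\<^sup>2) summable_on UNIV"
    by (rule L2_summable[OF L2_diff[OF from_ell2_L2 from_ell2_L2]])
  show "(\<lambda>x. (cmod (ell2_fun (u - v) x))\<^sup>2) summable_on UNIV" by (rule ell2_fun_sq_summable)
  fix x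
  show "m x * (cmod (from_ell2 u x - from_ell2 v x))\<^sup>2 \<le> (cmod (ell2_fun (u - v) x))\<^sup>2"
    by (simp add: from_ell2_def ell2_fun_diff diff_divide_distrib[symmetric] m_cmod_div_sqrt_m_sq)
qed

lemma L2_contraction_fixpoint:
  assumes G: "\<And>g. g \<in> L2 \<Longrightarrow> G g \<in> L2" and q: "0 \<le> q" "q < 1"
    and contr: "\<And>g h. g \<in> L2 \<Longrightarrow> h \<in> L2 \<Longrightarrow>
                   norm2 (\<lambda>x. G g x - G h x) \<le> q * norm2 (\<lambda>x. g x - h x)"
  shows "\<exists>g\<in>L2. G g = g"
proof -
  define T where "T u = to_ell2 (G (from_ell2 u))" for u
  have "dist (T u) (T v) \<le> sqrt q * dist u v" for u v
  proof -
    have "(dist (T u) (T v))\<^sup>2 = norm2 (\<lambda>x. G (from_ell2 u) x - G (from_ell2 v) x)"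
      unfolding T_def dist_norm using G from_ell2_L2
      by (simp add: to_ell2_diff norm_to_ell2 L2_diff)
    also have "\<dots> \<le> q * (norm (u - v))\<^sup>2"
      using contr[OF from_ell2_L2 from_ell2_L2] norm2_from_ell2_diff_le[of u v] q(1)
      by (meson mult_left_mono order_trans)
    also have "\<dots> = (sqrt q * dist u v)\<^sup>2" using q by (simp add: power_mult_distrib dist_norm)
    finally show ?thesis by (rule power2_le_imp_le) (use q in simp)
  qed
  then obtain u where "T u = u" using banach_fix_type[of "sqrt q" T] q by auto
  then have "G (from_ell2 u) = from_ell2 u"
    unfolding T_def using from_to_ell2[OF G[OF from_ell2_L2]] by metis
  then show ?thesis using from_ell2_L2 by blast
qed

definition shifted :: "complex \<Rightarrow> ('a \<Rightarrow> complex) \<Rightarrow> 'a \<Rightarrow> complex" where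
  "shifted z f x = dlap f x - z * f x"

lemma shifted_L2: "f \<in> L2 \<Longrightarrow> shifted z f \<in> L2"
  unfolding shifted_def using dlap_L2 by (intro L2_diff L2_cmult) auto

lemma shifted_diff: "f \<in> L2 \<Longrightarrow> g \<in> L2 \<Longrightarrow> shifted z (\<lambda>x. f x - g x) = (\<lambda>x. shifted z f x - shifted z g x)"
  unfolding shifted_def using dlap_diff by (simp add: fun_eq_iff algebra_simps)

lemma shifted_norm2_le: "h \<in> L2 \<Longrightarrow> norm2 (shifted z h) \<le> (8 * deg_sup\<^sup>2 + 2 * (cmod z)\<^sup>2) * norm2 h"
proof -
  assume h: "h \<in> L2"
  have "norm2 (shifted z h) \<le> 2 * norm2 (dlap h) + 2 * norm2 (\<lambda>x. z * h x)"
    unfolding shifted_def[abs_def] using dlap_L2[OF h] L2_cmult[OF h] by (intro norm2_diff_le) auto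
  also have "norm2 (dlap h) \<le> deg_sup * (4 * deg_sup * norm2 h)"
    using dlap_L2[OF h] energy_sum_le[OF h] deg_sup_nonneg by (meson mult_left_mono order_trans)
  also have "norm2 (\<lambda>x. z * h x) = (cmod z)\<^sup>2 * norm2 h" by (rule norm2_cmult)
  finally show ?thesis by (simp add: algebra_simps power2_eq_square)
qed

lemma norm2_diff_scaled:
  assumes u: "u \<in> L2" and v: "v \<in> L2"
  shows "norm2 (\<lambda>x. u x - complex_of_real t * v x) = norm2 u - 2 * t * Re (l2_inner m v u) + t\<^sup>2 * norm2 v"
proof -
  let ?r = "\<lambda>x. m x * Re (v x * cnj (u x))"
  have r: "?r summable_on UNIV" "infsum ?r UNIV = Re (l2_inner m v u)"
    using summable_on_Re[OF l2_inner_summable[OF v u]] infsum_Re[OF l2_inner_summable[OF v u]]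
    by (simp_all add: l2_inner_def mult.assoc)
  have sq: "(cmod (a - complex_of_real t * c))\<^sup>2 = (cmod a)\<^sup>2 - 2 * t * Re (c * cnj a) + t\<^sup>2 * (cmod c)\<^sup>2"
    for a c by (simp only: cmod_power2) (simp add: power2_eq_square algebra_simps)
  have "norm2 (\<lambda>x. u x - complex_of_real t * v x)
      = (\<Sum>\<^sub>\<infinity>x. (m x * (cmod (u x))\<^sup>2 - (2 * t) * ?r x) + t\<^sup>2 * (m x * (cmod (v x))\<^sup>2))"
    unfolding norm2_def sq by (intro infsum_cong) (simp add: algebra_simps)
  also have "\<dots> = norm2 u - 2 * t * infsum ?r UNIV + t\<^sup>2 * norm2 v"
    using L2_summable[OF u] L2_summable[OF v] r(1) unfolding norm2_def
    by (simp add: infsum_add infsum_diff summable_on_diff summable_on_cmult_right infsum_cmult_right')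
  finally show ?thesis using r(2) by simp
qed

context
  fixes c :: real
  assumes coercive: "\<And>f. f \<in> L2 \<Longrightarrow> c * norm2 f \<le> Re (l2_inner m (dlap f) f)"
begin

lemma shifted_coercive: "h \<in> L2 \<Longrightarrow> (c - Re z) * norm2 h \<le> Re (l2_inner m (shifted z h) h)"
  using coercive[of h] dlap_L2[of h] L2_cmult[of h z]
  by (simp add: shifted_def[abs_def] l2_inner_diff_left l2_inner_cmult_left l2_inner_self left_diff_distrib)

text \<open>The Lax--Milgram step: for small \<open>t > 0\<close> the map \<open>h \<mapsto> h - t (H - z) h\<close> is a contraction.\<close>

lemma shifted_contraction:
  assumes z: "Re z < c"
  shows "\<exists>t q. t \<noteq> 0 \<and> 0 \<le> q \<and> q < 1 \<and>
           (\<forall>h\<in>L2. norm2 (\<lambda>x. h x - complex_of_real t * shifted z h x) \<le> q * norm2 h)"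
proof -
  define a where "a = c - Re z"
  define B where "B = 8 * deg_sup\<^sup>2 + 2 * (cmod z)\<^sup>2 + a\<^sup>2 + 1"
  have a: "0 < a" unfolding a_def using z by simp
  have B: "a\<^sup>2 < B" unfolding B_def by (simp add: add_nonneg_pos)
  then have Bp: "0 < B" using zero_le_power2[of a] by linarith
  have step: "norm2 (\<lambda>x. h x - complex_of_real (a / B) * shifted z h x) \<le> (1 - a\<^sup>2 / B) * norm2 h"
    if h: "h \<in> L2" for h
  proof -
    let ?t = "a / B"
    have "a * norm2 h \<le> Re (l2_inner m (shifted z h) h)"
      using shifted_coercive[OF h] unfolding a_def .
    moreover have "norm2 (shifted z h) \<le> B * norm2 h"
      using shifted_norm2_le[OF h, of z] norm2_nonneg[of h] unfolding B_def
      by (smt (verit) mult_right_mono zero_le_power2)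
    moreover have "0 \<le> ?t" using a Bp by simp
    ultimately have "norm2 h - 2 * ?t * Re (l2_inner m (shifted z h) h) + ?t\<^sup>2 * norm2 (shifted z h)
        \<le> norm2 h - 2 * ?t * (a * norm2 h) + ?t\<^sup>2 * (B * norm2 h)"
      by (smt (verit) mult_left_mono zero_le_power2)
    also have "\<dots> = (1 - a\<^sup>2 / B) * norm2 h" using Bp by (simp add: field_simps power2_eq_square)
    finally show ?thesis unfolding norm2_diff_scaled[OF h shifted_L2[OF h]] .
  qed
  moreover have "a / B \<noteq> 0" "0 \<le> 1 - a\<^sup>2 / B" "1 - a\<^sup>2 / B < 1"
    using a B Bp by (auto simp: field_simps)
  ultimately show ?thesis by blast
qed

lemma shifted_surj: "Re z < c \<Longrightarrow> k \<in> L2 \<Longrightarrow> \<exists>g\<in>L2. shifted z g = k"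
proof -
  assume z: "Re z < c" and k: "k \<in> L2"
  obtain t q where t: "t \<noteq> 0" and q: "0 \<le> q" "q < 1"
    and contr: "\<forall>h\<in>L2. norm2 (\<lambda>x. h x - complex_of_real t * shifted z h x) \<le> q * norm2 h"
    using shifted_contraction[OF z] by blast
  define G where "G g x = g x - complex_of_real t * (shifted z g x - k x)" for g x
  have G_L2: "G g \<in> L2" if "g \<in> L2" for g
    unfolding G_def[abs_def] using that k shifted_L2 by (intro L2_diff L2_cmult) auto
  have G_contr: "norm2 (\<lambda>x. G g x - G h x) \<le> q * norm2 (\<lambda>x. g x - h x)" if "g \<in> L2" "h \<in> L2" for g h
  proof -
    have "(\<lambda>x. G g x - G h x) = (\<lambda>x. (g x - h x) - complex_of_real t * shifted z (\<lambda>y. g y - h y) x)"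
      unfolding G_def shifted_diff[OF that] by (simp add: fun_eq_iff algebra_simps)
    then show ?thesis using contr L2_diff[OF that] by simp
  qed
  have "\<exists>g\<in>L2. G g = g" by (rule L2_contraction_fixpoint[OF G_L2 q G_contr])
  then obtain g where "g \<in> L2" "G g = g" by blast
  moreover from this(2) have "shifted z g = k" using t by (simp add: G_def fun_eq_iff)
  ultimately show ?thesis by blast
qed

lemma shifted_inj: "Re z < c \<Longrightarrow> inj_on (shifted z) L2"
proof (rule inj_onI)
  fix f g assume z: "Re z < c" and f: "f \<in> L2" and g: "g \<in> L2" and eq: "shifted z f = shifted z g"
  let ?h = "\<lambda>x. f x - g x"
  have "(c - Re z) * norm2 ?h \<le> Re (l2_inner m (shifted z ?h) ?h)"
    by (rule shifted_coercive[OF L2_diff[OF f g]])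
  also have "\<dots> = 0" unfolding shifted_diff[OF f g] eq by (simp add: l2_inner_def)
  finally have "norm2 ?h \<le> 0" using z by (simp add: mult_le_0_iff)
  then have "?h = (\<lambda>_. 0)" by (rule norm2_le_0_imp_zero[OF L2_diff[OF f g]])
  then show "f = g" by (simp add: fun_eq_iff)
qed

lemma bij_betw_shifted:
  assumes z: "Re z < c" shows "bij_betw (shifted z) L2 L2"
proof -
  have "L2 \<subseteq> shifted z ` L2"
  proof
    fix k assume "k \<in> L2"
    then obtain g where "g \<in> L2" "shifted z g = k" using shifted_surj[OF z] by blast
    then show "k \<in> shifted z ` L2" by blast
  qed
  then show ?thesis using shifted_inj[OF z] shifted_L2 by (auto simp: bij_betw_def)
qed

lemma dirichlet_spectrum_ge: "z \<in> dirichlet_spectrum b m (- D) \<Longrightarrow> c \<le> Re z"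
  using bij_betw_shifted[of z]
  by (force simp: dirichlet_spectrum_def shifted_def[abs_def] dirichlet_op_eq cong: bij_betw_cong)

end

end

section \<open>Shortest paths to the boundary and the Poincar\'e inequality\<close>

lemma sum_swap_symmetric_le:
  fixes c w :: "'a \<times> 'a \<Rightarrow> real"
  assumes G: "finite G" "prod.swap ` G \<subseteq> G"
    and c: "\<And>e. 0 \<le> c e" "\<And>e. c (prod.swap e) = c e"
    and w: "\<And>e. w e + w (prod.swap e) \<le> V"
  shows "(\<Sum>e\<in>G. c e * w e) \<le> V / 2 * (\<Sum>e\<in>G. c e)"
proof -
  have "G \<subseteq> prod.swap ` G"
  proof
    fix e assume "e \<in> G"
    then show "e \<in> prod.swap ` G" using G(2) by (intro image_eqI[of _ _ "prod.swap e"]) auto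
  qed
  then have "prod.swap ` G = G" using G(2) by blast
  then have "(\<Sum>e\<in>G. c e * w e) = (\<Sum>e\<in>G. c e * w (prod.swap e))"
    using sum.reindex[of prod.swap G "\<lambda>e. c e * w e"] by (simp add: c(2) o_def)
  then have "2 * (\<Sum>e\<in>G. c e * w e) = (\<Sum>e\<in>G. c e * (w e + w (prod.swap e)))"
    by (simp add: sum.distrib distrib_left)
  also have "\<dots> \<le> (\<Sum>e\<in>G. c e * V)" by (intro sum_mono mult_left_mono w c(1))
  also have "\<dots> = V * (\<Sum>e\<in>G. c e)" by (simp add: sum_distrib_left mult.commute)
  finally show ?thesis by simp
qed

lemma Cauchy_Schwarz_weighted_sum:
  fixes w a :: "'b \<Rightarrow> real"
  assumes "\<And>e. e \<in> A \<Longrightarrow> 0 < w e"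
  shows "(\<Sum>e\<in>A. a e)\<^sup>2 \<le> (\<Sum>e\<in>A. 1 / w e) * (\<Sum>e\<in>A. w e * (a e)\<^sup>2)"
proof -
  have "(\<Sum>e\<in>A. a e)\<^sup>2 = (\<Sum>e\<in>A. (1 / sqrt (w e)) * (sqrt (w e) * a e))\<^sup>2"
    by (intro arg_cong[where f="\<lambda>t. t\<^sup>2"] sum.cong) (auto simp: field_simps dest: assms)
  also have "\<dots> \<le> (\<Sum>e\<in>A. (1 / sqrt (w e))\<^sup>2) * (\<Sum>e\<in>A. (sqrt (w e) * a e)\<^sup>2)"
    by (rule Cauchy_Schwarz_ineq_sum)
  also have "\<dots> = (\<Sum>e\<in>A. 1 / w e) * (\<Sum>e\<in>A. w e * (a e)\<^sup>2)"
    by (intro arg_cong2[where f="(*)"] sum.cong) (auto simp: power_mult_distrib power_divide dest: assms)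
  finally show ?thesis .
qed

fun path_edges :: "'a list \<Rightarrow> ('a \<times> 'a) list" where
  "path_edges (x # y # \<gamma>) = (x, y) # path_edges (y # \<gamma>)"
| "path_edges _ = []"

lemma gpath_len_path_edges: "gpath_len b \<gamma> = sum_list (map (\<lambda>(u,v). 1 / b u v) (path_edges \<gamma>))"
  by (induction \<gamma> rule: path_edges.induct) auto

lemma telescope_path_edges:
  "\<gamma> \<noteq> [] \<Longrightarrow> f (hd \<gamma>) - f (last \<gamma>) = sum_list (map (\<lambda>(u,v). f u - f v) (path_edges \<gamma>))"
  for f :: "'a \<Rightarrow> 'b::ab_group_add"
proof (induction \<gamma> rule: path_edges.induct)
  case (1 x y \<gamma>)
  have "f (hd (x # y # \<gamma>)) - f (last (x # y # \<gamma>)) = (f x - f y) + (f (hd (y # \<gamma>)) - f (last (y # \<gamma>)))"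
    by simp
  also have "\<dots> = (f x - f y) + sum_list (map (\<lambda>(u,v). f u - f v) (path_edges (y # \<gamma>)))"
    using 1 by simp
  finally show ?case by simp
qed auto

lemma path_edges_set: "(u,v) \<in> set (path_edges \<gamma>) \<Longrightarrow> u \<in> set \<gamma> \<and> v \<in> set \<gamma>"
  by (induction \<gamma> rule: path_edges.induct) auto

lemma path_edges_pos: "is_gpath b \<gamma> \<Longrightarrow> (u,v) \<in> set (path_edges \<gamma>) \<Longrightarrow> 0 < b u v"
  by (induction \<gamma> rule: path_edges.induct) auto

lemma distinct_path_edges: "distinct \<gamma> \<Longrightarrow> distinct (path_edges \<gamma>)"
  by (induction \<gamma> rule: path_edges.induct) (auto dest: path_edges_set)

lemma path_edges_antisym: "distinct \<gamma> \<Longrightarrow> (u,v) \<in> set (path_edges \<gamma>) \<Longrightarrow> (v,u) \<notin> set (path_edges \<gamma>)"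
  by (induction \<gamma> rule: path_edges.induct) (auto dest: path_edges_set)

locale dense_dirichlet_graph = dirichlet_graph +
  assumes dense: "rel_dense b D"
begin

definition cov_rad :: real where "cov_rad = (SOME R. 0 < R \<and> (\<Union>p\<in>D. Bball b p R) = UNIV)"

lemma cov_rad_pos: "0 < cov_rad" and exists_near_D: "\<exists>p\<in>D. gdist b x p \<le> cov_rad"
proof -
  have cov: "0 < cov_rad \<and> (\<Union>p\<in>D. Bball b p cov_rad) = UNIV"
    unfolding cov_rad_def using dense unfolding rel_dense_def by (rule someI_ex)
  then show "0 < cov_rad" by simp
  have "x \<in> (\<Union>p\<in>D. Bball b p cov_rad)" using cov by simp
  then show "\<exists>p\<in>D. gdist b x p \<le> cov_rad" using gdist_sym unfolding Bball_def by auto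
qed

lemma Inr_upper:
  assumes "x \<notin> D" "0 < r" "Uball b x r \<subseteq> - D" shows "r \<le> Inr b (- D)"
proof -
  have "s \<le> cov_rad" if "0 < s" "y \<notin> D" "Uball b y s \<subseteq> - D" for s y
    using exists_near_D[of y] that by (force simp: Uball_def)
  then show ?thesis
    unfolding Inr_def using assms by (intro cSup_upper) (auto intro!: bdd_aboveI[of _ cov_rad])
qed

definition paths_to_D :: "'a \<Rightarrow> 'a list set" where
  "paths_to_D x = {\<gamma>. is_gpath b \<gamma> \<and> hd \<gamma> = x \<and> last \<gamma> \<in> D \<and> gpath_len b \<gamma> \<le> cov_rad + 1}"

lemma finite_paths_to_D: "finite (paths_to_D x)"
proof (rule finite_subset)
  show "finite {\<gamma>. is_gpath b \<gamma> \<and> hd \<gamma> = x \<and> gpath_len b \<gamma> \<le> cov_rad + 1}"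
    using cov_rad_pos by (intro finite_gpaths_from) simp
qed (auto simp: paths_to_D_def)

lemma paths_to_D_nonempty: "paths_to_D x \<noteq> {}"
proof -
  obtain p where p: "p \<in> D" "gdist b x p < cov_rad + 1" using exists_near_D[of x] by force
  then obtain \<gamma> where "is_gpath b \<gamma>" "hd \<gamma> = x" "last \<gamma> = p" "gpath_len b \<gamma> < cov_rad + 1"
    by (blast elim: gdist_less_obtains_gpath)
  then show ?thesis using p unfolding paths_to_D_def by force
qed

text \<open>A shortest path from \<open>x\<close> to \<open>D\<close>; the length bound in \<open>paths_to_D\<close> only makes the set finite.\<close>

definition geodesic :: "'a \<Rightarrow> 'a list" where
  "geodesic x = arg_min_on (gpath_len b) (paths_to_D x)"

lemma geodesic_gpath: "is_gpath b (geodesic x)" and geodesic_hd: "hd (geodesic x) = x"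
  and geodesic_last: "last (geodesic x) \<in> D"
  using arg_min_if_finite(1)[OF finite_paths_to_D paths_to_D_nonempty, of "gpath_len b" x]
  by (simp_all add: geodesic_def paths_to_D_def)

lemma geodesic_minimal:
  assumes "is_gpath b \<gamma>" "hd \<gamma> = x" "last \<gamma> \<in> D" shows "gpath_len b (geodesic x) \<le> gpath_len b \<gamma>"
proof (cases "gpath_len b \<gamma> \<le> cov_rad + 1")
  case True
  then show ?thesis unfolding geodesic_def using assms
    by (intro arg_min_least finite_paths_to_D paths_to_D_nonempty) (auto simp: paths_to_D_def)
next
  case False
  moreover have "geodesic x \<in> paths_to_D x"
    unfolding geodesic_def by (rule arg_min_if_finite(1)[OF finite_paths_to_D paths_to_D_nonempty])
  ultimately show ?thesis by (simp add: paths_to_D_def)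
qed

text \<open>A repeated vertex would allow cutting out a loop of positive length.\<close>

lemma distinct_geodesic: "distinct (geodesic x)"
proof (rule ccontr)
  assume "\<not> distinct (geodesic x)"
  then obtain xs ys zs y where e: "geodesic x = xs @ [y] @ ys @ [y] @ zs"
    using not_distinct_decomp by blast
  define \<alpha> where "\<alpha> = xs @ [y]"
  define \<beta> where "\<beta> = y # ys @ [y]"
  define \<delta> where "\<delta> = y # zs"
  have split: "geodesic x = \<alpha> @ tl (\<beta> @ tl \<delta>)" by (simp add: e \<alpha>_def \<beta>_def \<delta>_def)
  have ends: "last \<alpha> = hd (\<beta> @ tl \<delta>)" "last \<beta> = hd \<delta>" "last \<alpha> = hd \<delta>"
    by (simp_all add: \<alpha>_def \<beta>_def \<delta>_def)
  have "is_gpath b \<alpha>" "is_gpath b \<beta>" "is_gpath b \<delta>"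
    using geodesic_gpath[of x] is_gpath_join[OF _ _ ends(1)] is_gpath_join[OF _ _ ends(2)]
    by (simp_all add: split \<alpha>_def \<beta>_def \<delta>_def)
  then have "gpath_len b (geodesic x) \<le> gpath_len b (\<alpha> @ tl \<delta>)"
    using geodesic_hd[of x] geodesic_last[of x] is_gpath_join[OF _ _ ends(3)]
    by (intro geodesic_minimal) (auto simp: e \<alpha>_def \<delta>_def hd_append)
  moreover have "0 < gpath_len b \<beta>" by (rule gpath_len_pos[OF \<open>is_gpath b \<beta>\<close>]) (simp add: \<beta>_def)
  ultimately show False
    using gpath_len_join[OF _ _ ends(1)] gpath_len_join[OF _ _ ends(2)] gpath_len_join[OF _ _ ends(3)]
    by (simp add: split \<alpha>_def \<beta>_def \<delta>_def)
qed

lemma geodesic_len_pos: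
  assumes "x \<notin> D" shows "0 < gpath_len b (geodesic x)"
proof -
  obtain y \<gamma> where g: "geodesic x = y # \<gamma>" using geodesic_gpath[of x] by (cases "geodesic x") auto
  have "\<gamma> \<noteq> []" using g geodesic_hd[of x] geodesic_last[of x] assms by auto
  then show ?thesis using geodesic_gpath[of x] g by (intro gpath_len_pos) (auto simp: neq_Nil_conv)
qed

text \<open>The open ball of radius \<open>gpath_len b (geodesic x)\<close> around \<open>x\<close> misses \<open>D\<close>.\<close>

lemma geodesic_len_le_Inr: "x \<notin> D \<Longrightarrow> gpath_len b (geodesic x) \<le> Inr b (- D)"
proof (intro Inr_upper geodesic_len_pos subsetI)
  fix y assume "y \<in> Uball b x (gpath_len b (geodesic x))"
  then obtain \<gamma> where "is_gpath b \<gamma>" "hd \<gamma> = x" "last \<gamma> = y" "gpath_len b \<gamma> < gpath_len b (geodesic x)"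
    by (auto simp: Uball_def elim: gdist_less_obtains_gpath)
  then show "y \<in> - D" using geodesic_minimal[of \<gamma> x] by force
qed

lemma gdist_geodesic_vertex: "u \<in> set (geodesic x) \<Longrightarrow> gdist b u x \<le> gpath_len b (geodesic x)"
  using gpath_prefix[OF geodesic_gpath, of u x] gdist_le_gpath_len gdist_sym geodesic_hd[of x]
  by (metis order_trans)

lemma Inr_pos: "x \<notin> D \<Longrightarrow> 0 < Inr b (- D)"
  using geodesic_len_pos geodesic_len_le_Inr by (blast intro: less_le_trans)

abbreviation geodesic_edges :: "'a \<Rightarrow> ('a \<times> 'a) set" where
  "geodesic_edges x \<equiv> set (path_edges (geodesic x))"

lemma cmod_sq_le_geodesic_energy:
  assumes f0: "\<And>y. y \<in> D \<Longrightarrow> f y = 0" and x: "x \<notin> D"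
  shows "(cmod (f x))\<^sup>2 \<le> Inr b (- D) * (\<Sum>e\<in>geodesic_edges x. edge_energy f e)"
proof -
  let ?g = "geodesic x"
  have dist: "distinct (path_edges ?g)" using distinct_path_edges[OF distinct_geodesic] .
  have "?g \<noteq> []" using geodesic_gpath[of x] by auto
  have "f x = f (hd ?g) - f (last ?g)" using geodesic_hd[of x] f0[OF geodesic_last[of x]] by simp
  also have "\<dots> = sum_list (map (\<lambda>(u,v). f u - f v) (path_edges ?g))"
    by (rule telescope_path_edges[OF \<open>?g \<noteq> []\<close>])
  also have "\<dots> = (\<Sum>e\<in>geodesic_edges x. f (fst e) - f (snd e))"
    using dist by (simp add: sum_list_distinct_conv_sum_set case_prod_beta)
  finally have "(cmod (f x))\<^sup>2 \<le> (\<Sum>e\<in>geodesic_edges x. cmod (f (fst e) - f (snd e)))\<^sup>2"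
    by (metis norm_ge_zero norm_sum power_mono)
  also have "\<dots> \<le> (\<Sum>e\<in>geodesic_edges x. 1 / b (fst e) (snd e)) * (\<Sum>e\<in>geodesic_edges x. edge_energy f e)"
    unfolding edge_energy_def using path_edges_pos[OF geodesic_gpath]
    by (intro Cauchy_Schwarz_weighted_sum) auto
  also have "(\<Sum>e\<in>geodesic_edges x. 1 / b (fst e) (snd e)) = gpath_len b ?g"
    using dist by (simp add: gpath_len_path_edges sum_list_distinct_conv_sum_set case_prod_beta)
  also have "\<dots> * (\<Sum>e\<in>geodesic_edges x. edge_energy f e) \<le> Inr b (- D) * (\<Sum>e\<in>geodesic_edges x. edge_energy f e)"
    using geodesic_len_le_Inr[OF x] by (intro mult_right_mono sum_nonneg edge_energy_nonneg) auto
  finally show ?thesis .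
qed

text \<open>An edge lying on the geodesic of \<open>x\<close> in either orientation forces \<open>x\<close> into the ball of radius
  \<open>Inr\<close> around its first endpoint, and no geodesic uses both orientations.\<close>

lemma geodesic_edge_weight_le:
  assumes F: "finite F" "F \<subseteq> - D"
  shows "(\<Sum>x\<in>F. if e \<in> geodesic_edges x then m x else 0)
       + (\<Sum>x\<in>F. if prod.swap e \<in> geodesic_edges x then m x else 0) \<le> volsup b m (Inr b (- D))"
proof -
  let ?B = "Bball b (fst e) (Inr b (- D))"
  have "(\<Sum>x\<in>F. if e \<in> geodesic_edges x then m x else 0)
       + (\<Sum>x\<in>F. if prod.swap e \<in> geodesic_edges x then m x else 0) \<le> (\<Sum>x\<in>F. if x \<in> ?B then m x else 0)"
    unfolding sum.distrib[symmetric]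
  proof (intro sum_mono)
    fix x assume "x \<in> F"
    then have x: "x \<notin> D" using F by auto
    show "(if e \<in> geodesic_edges x then m x else 0) + (if prod.swap e \<in> geodesic_edges x then m x else 0)
        \<le> (if x \<in> ?B then m x else 0)"
    proof (cases "e \<in> geodesic_edges x \<or> prod.swap e \<in> geodesic_edges x")
      case True
      then have "fst e \<in> set (geodesic x)" by (cases e) (auto dest: path_edges_set)
      then have "x \<in> ?B"
        using gdist_geodesic_vertex geodesic_len_le_Inr[OF x] by (force simp: Bball_def)
      moreover have "\<not> (e \<in> geodesic_edges x \<and> prod.swap e \<in> geodesic_edges x)"
        using path_edges_antisym[OF distinct_geodesic] by (cases e) auto
      ultimately show ?thesis using m_nonneg[of x] by auto
    qed (simp add: m_nonneg)
  qed
  also have "\<dots> = sum m (F \<inter> ?B)" by (simp add: sum.inter_restrict[OF F(1)])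
  also have "\<dots> \<le> sum m ?B" by (intro sum_mono2 finite_Bball m_nonneg) auto
  also have "\<dots> \<le> volsup b m (Inr b (- D))" using vol_Bball_le_volsup by (simp add: vol_Bball)
  finally show ?thesis .
qed

lemma poincare_finite:
  assumes f0: "\<And>y. y \<in> D \<Longrightarrow> f y = 0" and F: "finite F" "F \<subseteq> - D"
  obtains G where "finite G"
    "(\<Sum>x\<in>F. m x * (cmod (f x))\<^sup>2) \<le> Inr b (- D) * (volsup b m (Inr b (- D)) / 2) * (\<Sum>e\<in>G. edge_energy f e)"
proof (cases "F = {}")
  case True
  then show ?thesis using that[of "{}"] by simp
next
  case False
  then have I: "0 \<le> Inr b (- D)" using F Inr_pos by (auto intro: less_imp_le)
  let ?I = "Inr b (- D)" and ?V = "volsup b m (Inr b (- D))"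
  define G where "G = (\<Union>x\<in>F. geodesic_edges x) \<union> prod.swap ` (\<Union>x\<in>F. geodesic_edges x)"
  define w where "w e = (\<Sum>x\<in>F. if e \<in> geodesic_edges x then m x else 0)" for e
  have G: "finite G" "prod.swap ` G \<subseteq> G" unfolding G_def using F by (auto simp: image_Un image_image)
  have "(\<Sum>x\<in>F. m x * (cmod (f x))\<^sup>2) \<le> (\<Sum>x\<in>F. m x * (?I * (\<Sum>e\<in>geodesic_edges x. edge_energy f e)))"
    using F by (intro sum_mono mult_left_mono cmod_sq_le_geodesic_energy[OF f0] m_nonneg) auto
  also have "\<dots> = ?I * (\<Sum>x\<in>F. \<Sum>e\<in>geodesic_edges x. m x * edge_energy f e)"
    by (simp add: sum_distrib_left mult_ac)
  also have "\<dots> = ?I * (\<Sum>x\<in>F. \<Sum>e\<in>G. if e \<in> geodesic_edges x then m x * edge_energy f e else 0)"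
  proof -
    have "G \<inter> geodesic_edges x = geodesic_edges x" if "x \<in> F" for x using that by (auto simp: G_def)
    then have "(\<Sum>e\<in>geodesic_edges x. m x * edge_energy f e)
        = (\<Sum>e\<in>G. if e \<in> geodesic_edges x then m x * edge_energy f e else 0)" if "x \<in> F" for x
      using sum.inter_restrict[OF G(1), of "\<lambda>e. m x * edge_energy f e" "geodesic_edges x"] that by simp
    then have "(\<Sum>x\<in>F. \<Sum>e\<in>geodesic_edges x. m x * edge_energy f e)
        = (\<Sum>x\<in>F. \<Sum>e\<in>G. if e \<in> geodesic_edges x then m x * edge_energy f e else 0)"
      by (rule sum.cong[OF refl])
    then show ?thesis by simp
  qed
  also have "\<dots> = ?I * (\<Sum>e\<in>G. edge_energy f e * w e)"
    unfolding sum.swap[of _ F] w_def sum_distrib_left by (simp add: if_distrib mult_ac cong: if_cong)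
  also have "\<dots> \<le> ?I * (?V / 2 * (\<Sum>e\<in>G. edge_energy f e))"
    using G F geodesic_edge_weight_le I
    by (intro mult_left_mono sum_swap_symmetric_le edge_energy_nonneg edge_energy_swap) (auto simp: w_def)
  finally show ?thesis using that G(1) by (simp add: mult_ac)
qed

end

context dense_dirichlet_graph
begin

lemma volsup_Inr_pos:
  assumes "x \<notin> D" shows "0 < volsup b m (Inr b (- D))"
proof -
  have "x \<in> Bball b x (Inr b (- D))" using gdist_self Inr_pos[OF assms] by (simp add: Bball_def)
  then have "m x \<le> sum m (Bball b x (Inr b (- D)))" using finite_Bball m_nonneg by (intro member_le_sum)
  also have "\<dots> \<le> volsup b m (Inr b (- D))" using vol_Bball_le_volsup by (simp add: vol_Bball)
  finally show ?thesis using m_pos[of x] by linarith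
qed

lemma poincare:
  assumes f: "f \<in> L2" and x0: "x0 \<notin> D"
  shows "norm2 f \<le> Inr b (- D) * (volsup b m (Inr b (- D)) / 2) * energy_sum f"
  unfolding norm2_def
proof (rule infsum_le_finite_sums[OF L2_summable[OF f]])
  let ?C = "Inr b (- D) * (volsup b m (Inr b (- D)) / 2)"
  fix F :: "'a set" assume F: "finite F"
  have "(\<Sum>x\<in>F. m x * (cmod (f x))\<^sup>2) = (\<Sum>x\<in>F - D. m x * (cmod (f x))\<^sup>2)"
    using F L2_vanishes[OF f] by (intro sum.mono_neutral_right) auto
  also obtain G where "finite G" "(\<Sum>x\<in>F - D. m x * (cmod (f x))\<^sup>2) \<le> ?C * (\<Sum>e\<in>G. edge_energy f e)"
    using poincare_finite[of f "F - D"] L2_vanishes[OF f] F by auto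
  note this(2)
  also have "?C * (\<Sum>e\<in>G. edge_energy f e) \<le> ?C * energy_sum f"
    unfolding energy_sum_def
    using edge_energy_summable[OF f] \<open>finite G\<close> Inr_pos[OF x0] volsup_Inr_pos[OF x0]
    by (intro mult_left_mono finite_sum_le_infsum) (auto simp: edge_energy_nonneg)
  finally show "(\<Sum>x\<in>F. m x * (cmod (f x))\<^sup>2) \<le> ?C * energy_sum f" .
qed

lemma dlap_coercive:
  assumes f: "f \<in> L2"
  shows "1 / (Inr b (- D) * volsup b m (Inr b (- D))) * norm2 f \<le> Re (l2_inner m (dlap f) f)"
proof -
  have "l2_inner m (dlap f) f = complex_of_real (energy_sum f / 2)"
    using green_formula[OF f f] energy_self[OF f] by simp
  then have re: "Re (l2_inner m (dlap f) f) = energy_sum f / 2" by (simp only: Re_complex_of_real)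
  show ?thesis
  proof (cases "D = UNIV")
    case True
    then have "f = (\<lambda>_. 0)" using L2_vanishes[OF f] by auto
    then show ?thesis using re energy_sum_nonneg[of f] by (simp add: norm2_def)
  next
    case False
    then obtain x0 where x0: "x0 \<notin> D" by auto
    then have "0 < Inr b (- D) * volsup b m (Inr b (- D))"
      using Inr_pos volsup_Inr_pos by simp
    then show ?thesis using poincare[OF f x0] unfolding re by (simp add: divide_le_eq mult_ac)
  qed
qed

end

theorem theorem3p12:
  fixes b :: "'a::countable \<Rightarrow> 'a \<Rightarrow> real" and m :: "'a \<Rightarrow> real" and D :: "'a set"
  assumes "weighted_graph b m" and "gconnected b" and "condB b m" and "condM m"
    and "rel_dense b D"
  shows "\<forall>z\<in>dirichlet_spectrum b m (- D).
           1 / (Inr b (- D) * volsup b m (Inr b (- D))) \<le> Re z"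
proof -
  interpret dense_dirichlet_graph b m D
    using assms by unfold_locales (simp_all add: weighted_graph_def)
  show ?thesis using dirichlet_spectrum_ge[OF dlap_coercive] by blast
qed

end
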